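(* Given a dominant weight $\lambda$ of size $n$, and $\sigma \in F(\lambda+\rho, n)$, we have \begin{equation*} \sum_{(w,T) \in f^{-1}(\sigma)} (-1)^{\ell(wT)}t^{\frac{1}{2}(\ell(w)+\ell(wT)-|T|)}(t-1)^{|T|}=(-1)^{n-a_{0}+\ell(C)}t^{n-a_{0}+\mathrm{inv}(\sigma)}(1-t)^{\mathrm{des}(\sigma)}, \end{equation*} where $C$ is the first column of $\sigma$, and $a_{0}$ is the unique entry of $[n]$ missing from $C$.
   Context: Type $A_{n-1}$ setting: the Weyl group is $W=S_n$ (one-line notation, length function $\ell$, Bruhat order $<$), $(i,j)$ denotes both the root $\epsilon_i-\epsilon_j$ and the transposition of values $i,j$. A dominant weight is identified with a partition $\lambda=(\lambda_1\ge\dots\ge\lambda_{n-1}\ge\lambda_n=0)$; $\rho=(n-1,n-2,\dots,1)$, and $\mu'$ denotes the conjugate partition of $\mu$. For $k<n$ let $\overline{\Gamma}(k)$ be the sequence of transpositions $((1,k+1),(1,k+2),\dots,(1,n),(2,k+1),\dots,(2,n),\dots,(k,k+1),\dots,(k,n))$, and $\overline{\Gamma}'(k)$ the sequence obtained by removing the transposition $(i,k+1)$ at the start of each row $i$. For the partition $\mu=\lambda+\rho$, the chain is $\overline{\Gamma}=\overline{\Gamma}_1\cdots\overline{\Gamma}_{\mu_1}$ with $\overline{\Gamma}_j=\overline{\Gamma}'(\mu'_j)$ if $j=\min\{i:\mu'_i=\mu'_j\}$ and $\overline{\Gamma}_j=\overline{\Gamma}(\mu'_j)$ otherwise. With $m$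 the number of transpositions $r_1,\dots,r_m$ in $\overline{\Gamma}$, $\mathcal{A}(\overline{\Gamma})$ is the set of pairs $(w,T)$, $w\in S_n$, $T=\{k_1<\dots<k_s\}\subseteq[m]$, with $w<wr_{k_1}<wr_{k_1}r_{k_2}<\dots<wr_{k_1}\cdots r_{k_s}$ in Bruhat order; write $wT=wr_{k_1}\cdots r_{k_s}$ and $|T|=s$. The splitting of $\overline{\Gamma}$ into $\overline{\Gamma}_1\cdots\overline{\Gamma}_{\mu_1}$ induces $T=T_1\cdots T_{\mu_1}$; set $\pi_j=wT_1\cdots T_j$. The filling map $f$ sends $(w,T)\in\mathcal{A}(\overline{\Gamma})$ to the filling of shape $\mu$ with $\sigma(i,j)=\pi_j(i)$ (column $j$ consists of the first $\mu'_j$ entries of $\pi_j$). Two cells attack if they are in the same column, or in consecutive columns $(i,j),(k,j+1)$ with $i>k$. $F(\mu,n)$ is the set of fillings $\sigma:\mu\to[n]$ with $\sigma(u)\ne\sigma(v)$ whenever $u,v$ attack, and weakly increasing along rows ($\sigma(u)\le\sigma(r(u))$, $r(u)$ the cell directly right of $u$). $\mathrm{inv}(\sigma)$ is the number of pairs of cells $(u,v)$ with $v=(i,k+1)$, $u=(j,k)$, $i<j$, and $\sigma(u)<\sigma(v)<\sigma(w)$ where $w$ is the cell directly to the right of $u$ if it exists (otherwise only $\sigma(u)<\sigma(v)$ is required); $\mathrm{des}(\sigma)$ is the number of cells $u$ with $\sigma(u)<\sigma(r(u))$. For a column $C$ viewed as a sequence, $\ell(C)$ is its number of inversions (pairs $i<j$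 with $C(i)>C(j)$). *)

theory Defs
  imports "HOL-Combinatorics.Combinatorics"
begin

(* Permutations of [n] are functions nat => nat with  w permutes {1..n};
   w i is the i-th entry in one-line notation. *)

definition perm_len :: "nat \<Rightarrow> (nat \<Rightarrow> nat) \<Rightarrow> nat" where
  "perm_len n w = card {(i,j). 1 \<le> i \<and> i < j \<and> j \<le> n \<and> w j < w i}"

definition bruhat_step :: "nat \<Rightarrow> (nat \<Rightarrow> nat) \<Rightarrow> (nat \<Rightarrow> nat) \<Rightarrow> bool" where
  "bruhat_step n u v \<longleftrightarrow>
     (\<exists>i j. 1 \<le> i \<and> i < j \<and> j \<le> n \<and> v = u \<circ> transpose i j) \<and> perm_len n u < perm_len n v"

definition bruhat_less :: "nat \<Rightarrow> (nat \<Rightarrow> nat) \<Rightarrow> (nat \<Rightarrow> nat) \<Rightarrow> bool" where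
  "bruhat_less n = (bruhat_step n)\<^sup>+\<^sup>+"

definition gbar :: "nat \<Rightarrow> nat \<Rightarrow> (nat \<times> nat) list" where
  "gbar n k = concat (map (\<lambda>i. map (\<lambda>j. (i,j)) [k+1..<n+1]) [1..<k+1])"

definition gbar' :: "nat \<Rightarrow> nat \<Rightarrow> (nat \<times> nat) list" where
  "gbar' n k = concat (map (\<lambda>i. map (\<lambda>j. (i,j)) [k+2..<n+1]) [1..<k+1])"

(* mu :: nat => nat gives the row lengths mu_1,...,mu_n (rows 1..n) *)
definition in_shape :: "nat \<Rightarrow> (nat \<Rightarrow> nat) \<Rightarrow> nat \<Rightarrow> nat \<Rightarrow> bool" where
  "in_shape n mu i j \<longleftrightarrow> 1 \<le> i \<and> i \<le> n \<and> 1 \<le> j \<and> j \<le> mu i"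

definition conj_part :: "nat \<Rightarrow> (nat \<Rightarrow> nat) \<Rightarrow> nat \<Rightarrow> nat" where
  "conj_part n mu j = card {i \<in> {1..n}. j \<le> mu i}"

definition chain_block :: "nat \<Rightarrow> (nat \<Rightarrow> nat) \<Rightarrow> nat \<Rightarrow> (nat \<times> nat) list" where
  "chain_block n mu j =
     (if j = (LEAST i. 1 \<le> i \<and> conj_part n mu i = conj_part n mu j)
      then gbar' n (conj_part n mu j) else gbar n (conj_part n mu j))"

definition alcove_chain :: "nat \<Rightarrow> (nat \<Rightarrow> nat) \<Rightarrow> (nat \<times> nat) list" where
  "alcove_chain n mu = concat (map (chain_block n mu) [1..<mu 1 + 1])"

(* position (0-indexed, exclusive) where block j ends *)
definition block_end :: "nat \<Rightarrow> (nat \<Rightarrow> nat) \<Rightarrow> nat \<Rightarrow> nat" where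
  "block_end n mu j = length (concat (map (chain_block n mu) [1..<j+1]))"

(* w r_{k1} ... r_{ks}, positions of the chain are 0-indexed *)
definition trans_prod :: "(nat \<Rightarrow> nat) \<Rightarrow> (nat \<times> nat) list \<Rightarrow> nat list \<Rightarrow> (nat \<Rightarrow> nat)" where
  "trans_prod w rs ks = foldl (\<lambda>u k. u \<circ> transpose (fst (rs ! k)) (snd (rs ! k))) w ks"

definition wT :: "nat \<Rightarrow> (nat \<Rightarrow> nat) \<Rightarrow> (nat \<Rightarrow> nat) \<Rightarrow> nat set \<Rightarrow> (nat \<Rightarrow> nat)" where
  "wT n mu w T = trans_prod w (alcove_chain n mu) (sorted_list_of_set T)"

definition admissible :: "nat \<Rightarrow> (nat \<Rightarrow> nat) \<Rightarrow> ((nat \<Rightarrow> nat) \<times> nat set) set" where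
  "admissible n mu = {(w,T). w permutes {1..n} \<and> T \<subseteq> {..<length (alcove_chain n mu)} \<and>
     (let ks = sorted_list_of_set T; rs = alcove_chain n mu in
       \<forall>p < length ks. bruhat_less n (trans_prod w rs (take p ks)) (trans_prod w rs (take (Suc p) ks)))}"

(* \<pi>_j = w T_1 ... T_j *)
definition pi_j :: "nat \<Rightarrow> (nat \<Rightarrow> nat) \<Rightarrow> (nat \<Rightarrow> nat) \<Rightarrow> nat set \<Rightarrow> nat \<Rightarrow> (nat \<Rightarrow> nat)" where
  "pi_j n mu w T j = trans_prod w (alcove_chain n mu)
      (filter (\<lambda>k. k < block_end n mu j) (sorted_list_of_set T))"

(* f^{-1}(\<sigma>): fillings compared on the cells of the shape *)
definition fiber :: "nat \<Rightarrow> (nat \<Rightarrow> nat) \<Rightarrow> (nat \<Rightarrow> nat \<Rightarrow> nat) \<Rightarrow> ((nat \<Rightarrow> nat) \<times> nat set) set" where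
  "fiber n mu \<sigma> = {(w,T) \<in> admissible n mu.
      \<forall>i j. in_shape n mu i j \<longrightarrow> pi_j n mu w T j i = \<sigma> i j}"

(* F(mu,n); fillings are functions row => column => value, relevant on cells *)
definition fillings_F :: "nat \<Rightarrow> (nat \<Rightarrow> nat) \<Rightarrow> (nat \<Rightarrow> nat \<Rightarrow> nat) set" where
  "fillings_F n mu = {\<sigma>.
     (\<forall>i j. in_shape n mu i j \<longrightarrow> \<sigma> i j \<in> {1..n}) \<and>
     (\<forall>i k j. in_shape n mu i j \<and> in_shape n mu k j \<and> i \<noteq> k \<longrightarrow> \<sigma> i j \<noteq> \<sigma> k j) \<and>
     (\<forall>i k j. in_shape n mu i j \<and> in_shape n mu k (Suc j) \<and> k < i \<longrightarrow> \<sigma> i j \<noteq> \<sigma> k (Suc j)) \<and>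
     (\<forall>i j. in_shape n mu i j \<and> in_shape n mu i (Suc j) \<longrightarrow> \<sigma> i j \<le> \<sigma> i (Suc j))}"

definition inv_fill :: "nat \<Rightarrow> (nat \<Rightarrow> nat) \<Rightarrow> (nat \<Rightarrow> nat \<Rightarrow> nat) \<Rightarrow> nat" where
  "inv_fill n mu \<sigma> = card {(i,j,k). in_shape n mu i (Suc k) \<and> in_shape n mu j k \<and> i < j \<and>
      \<sigma> j k < \<sigma> i (Suc k) \<and> (in_shape n mu j (Suc k) \<longrightarrow> \<sigma> i (Suc k) < \<sigma> j (Suc k))}"

definition des_fill :: "nat \<Rightarrow> (nat \<Rightarrow> nat) \<Rightarrow> (nat \<Rightarrow> nat \<Rightarrow> nat) \<Rightarrow> nat" where
  "des_fill n mu \<sigma> = card {(i,j). in_shape n mu i j \<and> in_shape n mu i (Suc j) \<and> \<sigma> i j < \<sigma> i (Suc j)}"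

definition first_col_len :: "nat \<Rightarrow> (nat \<Rightarrow> nat) \<Rightarrow> (nat \<Rightarrow> nat \<Rightarrow> nat) \<Rightarrow> nat" where
  "first_col_len n mu \<sigma> = card {(a,b). 1 \<le> a \<and> a < b \<and> b \<le> conj_part n mu 1 \<and> \<sigma> b 1 < \<sigma> a 1}"

definition missing_entry :: "nat \<Rightarrow> (nat \<Rightarrow> nat) \<Rightarrow> (nat \<Rightarrow> nat \<Rightarrow> nat) \<Rightarrow> nat" where
  "missing_entry n mu \<sigma> = (THE a. a \<in> {1..n} \<and> (\<forall>i. in_shape n mu i 1 \<longrightarrow> \<sigma> i 1 \<noteq> a))"

definition lam_rho :: "nat \<Rightarrow> (nat \<Rightarrow> nat) \<Rightarrow> nat \<Rightarrow> nat" where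
  "lam_rho n lam = (\<lambda>i. lam i + (n - i))"

end

theory Submission
  imports Defs
begin

text \<open>A step \<open>u \<mapsto> u (a b)\<close> with \<open>a < b\<close> goes
  up in Bruhat order iff \<open>u a < u b\<close>, and then the length grows by \<open>2c + 1\<close>, where \<open>c\<close>
  counts the positions between \<open>a\<close> and \<open>b\<close> whose values lie between \<open>u a\<close> and \<open>u b\<close>.
  So the summand of \<open>(w, T)\<close> is \<open>(-t)\<^bsup>\<ell>(w)\<^esup>\<close> times one factor \<open>(1 - t) t\<^sup>c\<close> per step,
  and the fibre sum becomes a transfer-matrix sum along the chain, cut down at the end of
  each block \<open>j\<close> to the permutations that list column \<open>j\<close> of \<open>\<sigma>\<close>.

  The first block is empty, so \<open>w\<close> must list the first column followed by \<open>a\<^sub>0\<close>; it has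
  \<open>n - a\<^sub>0 + \<ell>(C)\<close> inversions. Block \<open>j\<close> turns column \<open>j - 1\<close> (of length \<open>K\<close>) into
  column \<open>j\<close> row by row, with the transpositions \<open>(i, l)\<close>, \<open>l > K\<close>. In one row the many
  ways of raising the entry to its new value telescope, by
  \<open>(1 - t) t\<^bsup>h+1\<^esup> + (1 - t)\<^sup>2 t\<^sup>h = (1 - t) t\<^sup>h\<close>, to a single term: \<open>1\<close> if the entry
  is unchanged and \<open>(1 - t) t\<^sup>A\<close> otherwise, \<open>A\<close> counting the entries below it in
  column \<open>j - 1\<close> that lie strictly between its old and new value. The exponents of
  \<open>1 - t\<close> add up to \<open>des(\<sigma>)\<close>, and the \<open>A\<close>'s, together with the inversions of the
  columns, telescope to \<open>inv(\<sigma>) - \<ell>(C)\<close>.\<close>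

section \<open>Inversions and Bruhat covers by transpositions\<close>

definition rect_count :: "(nat \<Rightarrow> nat) \<Rightarrow> nat \<Rightarrow> nat \<Rightarrow> nat \<Rightarrow> nat \<Rightarrow> nat" where
  "rect_count u i l x y = card {c. i < c \<and> c < l \<and> x < u c \<and> u c < y}"

lemma card_filter_eq_sum:
  "finite A \<Longrightarrow> card {x\<in>A. P x} = (\<Sum>x\<in>A. if P x then 1 else 0)"
  by (simp add: sum.inter_filter[symmetric])

lemma perm_len_eq_sum:
  "int (perm_len n u) = (\<Sum>p\<in>{1..n}. \<Sum>q\<in>{1..n}. if p < q \<and> u q < u p then 1 else 0)"
proof -
  have "{(i,j). 1 \<le> i \<and> i < j \<and> j \<le> n \<and> u j < u i}
      = {x \<in> {1..n}\<times>{1..n}. fst x < snd x \<and> u (snd x) < u (fst x)}"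
    by auto
  then have "perm_len n u = card {x \<in> {1..n}\<times>{1..n}. fst x < snd x \<and> u (snd x) < u (fst x)}"
    by (simp add: perm_len_def)
  also have "\<dots> = (\<Sum>x\<in>{1..n}\<times>{1..n}. if fst x < snd x \<and> u (snd x) < u (fst x) then 1 else 0)"
    by (rule card_filter_eq_sum) simp
  also have "\<dots> = (\<Sum>p\<in>{1..n}. \<Sum>q\<in>{1..n}. if p < q \<and> u q < u p then 1 else 0)"
    by (simp add: sum.cartesian_product split_def)
  finally show ?thesis by (simp add: of_nat_sum of_bool_def[symmetric])
qed

lemma sum_sum_permute:
  assumes "\<tau> permutes S"
  shows "(\<Sum>p\<in>S. \<Sum>q\<in>S. f p q) = (\<Sum>p\<in>S. \<Sum>q\<in>S. f (\<tau> p) (\<tau> q))"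
proof -
  have "(\<Sum>p\<in>S. \<Sum>q\<in>S. f p q) = (\<Sum>p\<in>S. \<Sum>q\<in>S. f (\<tau> p) q)"
    using sum.permute[OF assms, of "\<lambda>p. \<Sum>q\<in>S. f p q"] by (simp add: comp_def)
  also have "\<dots> = (\<Sum>p\<in>S. \<Sum>q\<in>S. f (\<tau> p) (\<tau> q))"
    by (rule sum.cong[OF refl], subst sum.permute[OF assms]) (simp add: comp_def)
  finally show ?thesis .
qed

lemma perm_len_comp_involution:
  assumes "\<tau> permutes {1..n}" "\<And>x. \<tau> (\<tau> x) = x"
  shows "int (perm_len n (u \<circ> \<tau>)) = (\<Sum>p\<in>{1..n}. \<Sum>q\<in>{1..n}. if \<tau> p < \<tau> q \<and> u q < u p then 1 else 0)"
  unfolding perm_len_eq_sum by (subst sum_sum_permute[OF assms(1)]) (simp add: assms(2))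

lemma perm_len_comp_transpose:
  assumes inj: "inj_on u {1..n}" and ab: "1 \<le> a" "a < b" "b \<le> n" and lt: "u a < u b"
  shows "perm_len n (u \<circ> transpose a b) = perm_len n u + 2 * rect_count u a b (u a) (u b) + 1"
proof -
  define \<tau> where "\<tau> = transpose a b"
  define X where "X = {1..n} - {a} - {b}"
  define g :: "nat \<Rightarrow> nat \<Rightarrow> int" where
    "g p q = (if \<tau> p < \<tau> q \<and> u q < u p then 1 else 0) - (if p < q \<and> u q < u p then 1 else 0)" for p q
  have "\<tau> permutes {1..n}" unfolding \<tau>_def using ab by (intro permutes_swap_id) auto
  then have "int (perm_len n (u \<circ> \<tau>)) = (\<Sum>p\<in>{1..n}. \<Sum>q\<in>{1..n}. if \<tau> p < \<tau> q \<and> u q < u p then 1 else 0)"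
    by (rule perm_len_comp_involution) (simp add: \<tau>_def)
  then have diff: "int (perm_len n (u \<circ> \<tau>)) - int (perm_len n u) = (\<Sum>p\<in>{1..n}. \<Sum>q\<in>{1..n}. g p q)"
    unfolding perm_len_eq_sum[of n u] g_def by (simp add: sum_subtractf)
  have finite_X: "finite X" by (simp add: X_def)
  have split: "(\<Sum>p\<in>{1..n}. F p) = F a + F b + (\<Sum>p\<in>X. F p :: int)" for F
    using sum.remove[of "{1..n}" a F] sum.remove[of "{1..n} - {a}" b F] ab by (simp add: X_def)
  have g_XX: "g p q = 0" if "p \<in> X" "q \<in> X" for p q
    using that by (simp add: g_def \<tau>_def X_def)
  have g_ab: "g a a = 0" "g b b = 0" "g a b = 0" "g b a = 1"
    using ab lt by (auto simp: g_def \<tau>_def)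
  have g_c: "g a c + g b c + g c a + g c b = (if a < c \<and> c < b \<and> u a < u c \<and> u c < u b then 2 else 0)"
    if "c \<in> X" for c
  proof -
    have c: "c \<in> {1..n}" "c \<noteq> a" "c \<noteq> b" using that by (auto simp: X_def)
    have "a \<in> {1..n}" "b \<in> {1..n}" using ab by auto
    then have "u a \<noteq> u c" "u b \<noteq> u c" using c inj_onD[OF inj] by metis+
    with c show ?thesis using ab lt by (auto simp: g_def \<tau>_def transpose_def)
  qed
  have "(\<Sum>p\<in>{1..n}. \<Sum>q\<in>{1..n}. g p q) = 1 + (\<Sum>c\<in>X. g a c + g b c + g c a + g c b)"
    unfolding split using g_XX g_ab by (simp add: sum.distrib)
  also have "\<dots> = 1 + (\<Sum>c\<in>X. if a < c \<and> c < b \<and> u a < u c \<and> u c < u b then 2 else 0)"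
    by (simp add: g_c)
  also have "(\<Sum>c\<in>X. if a < c \<and> c < b \<and> u a < u c \<and> u c < u b then 2 else 0)
      = 2 * int (card {c\<in>X. a < c \<and> c < b \<and> u a < u c \<and> u c < u b})"
    unfolding card_filter_eq_sum[OF finite_X] of_nat_sum sum_distrib_left by (rule sum.cong) auto
  also have "{c\<in>X. a < c \<and> c < b \<and> u a < u c \<and> u c < u b} = {c. a < c \<and> c < b \<and> u a < u c \<and> u c < u b}"
    using ab by (auto simp: X_def)
  finally show ?thesis using diff unfolding \<tau>_def rect_count_def by linarith
qed

lemma bruhat_less_perm_len_less: "bruhat_less n u v \<Longrightarrow> perm_len n u < perm_len n v"
  unfolding bruhat_less_def by (induction rule: tranclp.induct) (auto simp: bruhat_step_def)

lemma permutes_comp_transpose: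
  "u permutes {1..n} \<Longrightarrow> a \<in> {1..n} \<Longrightarrow> b \<in> {1..n} \<Longrightarrow> u \<circ> transpose a b permutes {1..n}"
  by (simp add: permutes_compose permutes_swap_id)

lemma bruhat_less_comp_transpose_iff:
  assumes u: "u permutes {1..n}" and ab: "1 \<le> a" "a < b" "b \<le> n"
  shows "bruhat_less n u (u \<circ> transpose a b) \<longleftrightarrow> u a < u b"
proof
  assume less: "bruhat_less n u (u \<circ> transpose a b)"
  show "u a < u b"
  proof (rule ccontr)
    assume "\<not> u a < u b"
    moreover have "u a \<noteq> u b" using permutes_inj_on[OF u] ab by (auto dest: inj_onD)
    ultimately have "(u \<circ> transpose a b) a < (u \<circ> transpose a b) b" by simp
    moreover have "inj_on (u \<circ> transpose a b) {1..n}"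
      using permutes_inj_on[OF permutes_comp_transpose[OF u]] ab by simp
    ultimately have "perm_len n (u \<circ> transpose a b) < perm_len n (u \<circ> transpose a b \<circ> transpose a b)"
      using perm_len_comp_transpose ab by fastforce
    with bruhat_less_perm_len_less[OF less] show False by (simp add: comp_assoc)
  qed
next
  assume "u a < u b"
  then have "perm_len n u < perm_len n (u \<circ> transpose a b)"
    using perm_len_comp_transpose[OF permutes_inj_on[OF u] ab] by simp
  then show "bruhat_less n u (u \<circ> transpose a b)"
    unfolding bruhat_less_def bruhat_step_def using ab by blast
qed

section \<open>Weighted sums over ascending subchains\<close>

abbreviation transp :: "nat \<times> nat \<Rightarrow> nat \<Rightarrow> nat" where
  "transp r \<equiv> transpose (fst r) (snd r)"

definition cover_weight :: "'a::comm_ring_1 \<Rightarrow> (nat \<Rightarrow> nat) \<Rightarrow> nat \<times> nat \<Rightarrow> 'a" where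
  "cover_weight t u r = (1 - t) * t ^ rect_count u (fst r) (snd r) (u (fst r)) (u (snd r))"

text \<open>\<^term>\<open>path_sum t E rs u\<close> sums, over all subsequences of \<^term>\<open>rs\<close> along which
  \<^term>\<open>u\<close> keeps going up, the product of the cover weights times \<^term>\<open>E\<close> of the
  endpoint. \<^term>\<open>checked_sum\<close> does the same but drops a summand as soon as the predicate
  \<^term>\<open>chk p\<close> fails on the current permutation at some chain position \<^term>\<open>p\<close>.\<close>

fun path_sum :: "'a::comm_ring_1 \<Rightarrow> ((nat \<Rightarrow> nat) \<Rightarrow> 'a) \<Rightarrow> (nat \<times> nat) list \<Rightarrow> (nat \<Rightarrow> nat) \<Rightarrow> 'a"
  where
    "path_sum t E [] u = E u"
  | "path_sum t E (r # rs) u = path_sum t E rs u +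
       (if u (fst r) < u (snd r) then cover_weight t u r * path_sum t E rs (u \<circ> transp r) else 0)"

fun checked_sum :: "'a::comm_ring_1 \<Rightarrow> ((nat \<Rightarrow> nat) \<Rightarrow> 'a) \<Rightarrow> (nat \<Rightarrow> (nat \<Rightarrow> nat) \<Rightarrow> bool) \<Rightarrow>
    (nat \<times> nat) list \<Rightarrow> nat \<Rightarrow> (nat \<Rightarrow> nat) \<Rightarrow> 'a"
  where
    "checked_sum t E chk [] p u = E u"
  | "checked_sum t E chk (r # rs) p u = (if chk p u then checked_sum t E chk rs (Suc p) u +
       (if u (fst r) < u (snd r) then cover_weight t u r * checked_sum t E chk rs (Suc p) (u \<circ> transp r)
        else 0) else 0)"

fun ascending :: "(nat \<times> nat) list \<Rightarrow> (nat \<Rightarrow> nat) \<Rightarrow> nat list \<Rightarrow> bool" where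
  "ascending rs u [] = True"
| "ascending rs u (k # ks) = (u (fst (rs ! k)) < u (snd (rs ! k)) \<and> ascending rs (u \<circ> transp (rs ! k)) ks)"

fun path_weight :: "'a::comm_ring_1 \<Rightarrow> (nat \<times> nat) list \<Rightarrow> (nat \<Rightarrow> nat) \<Rightarrow> nat list \<Rightarrow> 'a" where
  "path_weight t rs u [] = 1"
| "path_weight t rs u (k # ks) = cover_weight t u (rs ! k) * path_weight t rs (u \<circ> transp (rs ! k)) ks"

fun checks_along :: "(nat \<Rightarrow> (nat \<Rightarrow> nat) \<Rightarrow> bool) \<Rightarrow> (nat \<times> nat) list \<Rightarrow> nat \<Rightarrow> (nat \<Rightarrow> nat) \<Rightarrow> nat list \<Rightarrow> bool"
  where
    "checks_along chk rs p u [] = (\<forall>q. p \<le> q \<and> q \<le> length rs \<longrightarrow> chk q u)"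
  | "checks_along chk rs p u (k # ks) =
       ((\<forall>q. p \<le> q \<and> q \<le> k \<longrightarrow> chk q u) \<and> checks_along chk rs (Suc k) (u \<circ> transp (rs ! k)) ks)"

lemma all_atLeastAtMost_split_first:
  "p \<le> L \<Longrightarrow> (\<forall>q. p \<le> q \<and> q \<le> L \<longrightarrow> P q) \<longleftrightarrow> P p \<and> (\<forall>q. Suc p \<le> q \<and> q \<le> L \<longrightarrow> P q)"
proof safe
  fix q assume "P p" "\<forall>q. Suc p \<le> q \<and> q \<le> L \<longrightarrow> P q" "p \<le> q" "q \<le> L"
  then show "P q" by (cases "q = p") auto
qed auto

lemma checks_along_split_first:
  assumes "\<forall>x\<in>set ks. p < x" "p \<le> length rs"
  shows "checks_along chk rs p u ks = (chk p u \<and> checks_along chk rs (Suc p) u ks)"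
proof (cases ks)
  case Nil
  then show ?thesis using all_atLeastAtMost_split_first[OF assms(2), of "\<lambda>q. chk q u"] by simp
next
  case (Cons k ks')
  then have "p \<le> k" using assms by auto
  then show ?thesis using Cons all_atLeastAtMost_split_first[of p k "\<lambda>q. chk q u"] by simp
qed

lemma sorted_list_of_set_insert_min:
  assumes "finite T" "\<forall>x\<in>T. p < x"
  shows "sorted_list_of_set (insert p T) = p # sorted_list_of_set T"
proof -
  have "Min (insert p T) = p" using assms by (auto intro!: Min_eqI)
  moreover have "insert p T - {p} = T" using assms by auto
  ultimately show ?thesis using sorted_list_of_set_nonempty[of "insert p T"] assms by simp
qed

lemma sum_Pow_insert:
  assumes "p \<notin> A" "finite A"
  shows "sum F (Pow (insert p A)) = sum F (Pow A) + sum (\<lambda>T. F (insert p T)) (Pow A)"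
proof -
  have "sum F (Pow (insert p A)) = sum F (Pow A) + sum F (insert p ` Pow A)"
    unfolding Pow_insert using assms by (intro sum.union_disjoint) auto
  also have "sum F (insert p ` Pow A) = sum (\<lambda>T. F (insert p T)) (Pow A)"
    using assms(1) by (subst sum.reindex) (auto simp: inj_on_def)
  finally show ?thesis .
qed

lemma sum_subsets_eq_checked_sum:
  assumes "p \<le> length rs"
  shows "(\<Sum>T\<in>Pow {p..<length rs}.
            if ascending rs u (sorted_list_of_set T) \<and> checks_along chk rs p u (sorted_list_of_set T)
            then path_weight t rs u (sorted_list_of_set T) else 0)
       = checked_sum t (\<lambda>v. if chk (length rs) v then 1 else 0) chk (drop p rs) p u"
  using assms
proof (induction "length rs - p" arbitrary: p u)
  case 0
  then have "p = length rs" by simp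
  moreover have "(\<forall>q. length rs \<le> q \<and> q \<le> length rs \<longrightarrow> chk q u) = chk (length rs) u"
    by (metis order_refl le_antisym)
  ultimately show ?case by simp
next
  case (Suc x)
  define A where "A = {Suc p..<length rs}"
  define E where "E = (\<lambda>v. if chk (length rs) v then 1 else (0::'a))"
  define F where "F = (\<lambda>q u T. if ascending rs u (sorted_list_of_set T) \<and> checks_along chk rs q u (sorted_list_of_set T)
            then path_weight t rs u (sorted_list_of_set T) else 0)"
  have p: "p < length rs" using Suc by simp
  have pA: "{p..<length rs} = insert p A" "p \<notin> A" "finite A" using p by (auto simp: A_def)
  have drop: "drop p rs = rs ! p # drop (Suc p) rs" using p by (simp add: Cons_nth_drop_Suc)
  have IH: "sum (F (Suc p) v) (Pow A) = checked_sum t E chk (drop (Suc p) rs) (Suc p) v" for v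
    unfolding F_def A_def E_def using Suc by (intro Suc.hyps) auto
  have above: "\<forall>x\<in>set (sorted_list_of_set T). p < x" "sorted_list_of_set (insert p T) = p # sorted_list_of_set T"
    if "T \<in> Pow A" for T
  proof -
    have "finite T" "T \<subseteq> A" using that pA(3) finite_subset by auto
    then have "\<forall>x\<in>T. p < x" by (auto simp: A_def)
    with \<open>finite T\<close> show "\<forall>x\<in>set (sorted_list_of_set T). p < x"
      "sorted_list_of_set (insert p T) = p # sorted_list_of_set T"
      by (simp, rule sorted_list_of_set_insert_min)
  qed
  have without_p: "F p u T = (if chk p u then F (Suc p) u T else 0)" if "T \<in> Pow A" for T
    using checks_along_split_first[OF above(1)[OF that]] p unfolding F_def by auto
  have with_p: "F p u (insert p T) = (if chk p u \<and> u (fst (rs ! p)) < u (snd (rs ! p))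
      then cover_weight t u (rs ! p) * F (Suc p) (u \<circ> transp (rs ! p)) T else 0)" if "T \<in> Pow A" for T
    using above(2)[OF that] unfolding F_def by auto
  have "sum (F p u) (Pow {p..<length rs}) = sum (F p u) (Pow A) + sum (\<lambda>T. F p u (insert p T)) (Pow A)"
    unfolding pA(1) using pA(2,3) by (rule sum_Pow_insert)
  also have "sum (\<lambda>T. F p u (insert p T)) (Pow A) = sum (\<lambda>T. if chk p u \<and> u (fst (rs ! p)) < u (snd (rs ! p))
      then cover_weight t u (rs ! p) * F (Suc p) (u \<circ> transp (rs ! p)) T else 0) (Pow A)"
    by (rule sum.cong[OF refl with_p])
  also have "\<dots> = (if chk p u \<and> u (fst (rs ! p)) < u (snd (rs ! p))
      then cover_weight t u (rs ! p) * sum (F (Suc p) (u \<circ> transp (rs ! p))) (Pow A) else 0)"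
    by (simp add: sum_distrib_left del: de_Morgan_conj not_less)
  also have "sum (F p u) (Pow A) = sum (\<lambda>T. if chk p u then F (Suc p) u T else 0) (Pow A)"
    by (rule sum.cong[OF refl without_p])
  also have "\<dots> = (if chk p u then sum (F (Suc p) u) (Pow A) else 0)"
    by simp
  finally have "sum (F p u) (Pow {p..<length rs}) = checked_sum t E chk (drop p rs) p u"
    unfolding drop by (simp add: IH)
  then show ?case by (simp add: F_def E_def)
qed

definition valid_chain :: "nat \<Rightarrow> (nat \<times> nat) list \<Rightarrow> bool" where
  "valid_chain n rs = (\<forall>r\<in>set rs. 1 \<le> fst r \<and> fst r < snd r \<and> snd r \<le> n)"

lemma valid_chain_nth:
  assumes "valid_chain n rs" "k < length rs"
  shows "1 \<le> fst (rs ! k)" "fst (rs ! k) < snd (rs ! k)" "snd (rs ! k) \<le> n"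
  using assms nth_mem[OF assms(2)] unfolding valid_chain_def by blast+

lemma trans_prod_Nil [simp]: "trans_prod w rs [] = w"
  by (simp add: trans_prod_def)

lemma trans_prod_Cons [simp]: "trans_prod w rs (k # ks) = trans_prod (w \<circ> transp (rs ! k)) rs ks"
  by (simp add: trans_prod_def)

lemma bruhat_chain_iff_ascending:
  assumes "u permutes {1..n}" "valid_chain n rs" "set ks \<subseteq> {..<length rs}"
  shows "(\<forall>p<length ks. bruhat_less n (trans_prod u rs (take p ks)) (trans_prod u rs (take (Suc p) ks)))
         \<longleftrightarrow> ascending rs u ks"
  using assms
proof (induction ks arbitrary: u)
  case Nil
  then show ?case by simp
next
  case (Cons k ks)
  have r: "1 \<le> fst (rs ! k)" "fst (rs ! k) < snd (rs ! k)" "snd (rs ! k) \<le> n"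
    using valid_chain_nth[OF Cons.prems(2)] Cons.prems(3) by auto
  then have "u \<circ> transp (rs ! k) permutes {1..n}"
    using permutes_comp_transpose[OF Cons.prems(1)] by simp
  then have IH: "(\<forall>p<length ks. bruhat_less n (trans_prod (u \<circ> transp (rs ! k)) rs (take p ks))
       (trans_prod (u \<circ> transp (rs ! k)) rs (take (Suc p) ks))) \<longleftrightarrow> ascending rs (u \<circ> transp (rs ! k)) ks"
    using Cons.IH Cons.prems by simp
  have "(\<forall>p<length (k # ks). bruhat_less n (trans_prod u rs (take p (k # ks)))
          (trans_prod u rs (take (Suc p) (k # ks))))
      \<longleftrightarrow> bruhat_less n u (u \<circ> transp (rs ! k)) \<and>
          (\<forall>p<length ks. bruhat_less n (trans_prod (u \<circ> transp (rs ! k)) rs (take p ks))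
              (trans_prod (u \<circ> transp (rs ! k)) rs (take (Suc p) ks)))"
    by (auto simp: less_Suc_eq_0_disj)
  then show ?case using IH bruhat_less_comp_transpose_iff[OF Cons.prems(1) r] by simp
qed

lemma perm_len_trans_prod:
  fixes t :: "'a::comm_ring_1"
  assumes "u permutes {1..n}" "valid_chain n rs" "set ks \<subseteq> {..<length rs}" "ascending rs u ks"
  shows "\<exists>e. perm_len n (trans_prod u rs ks) = perm_len n u + length ks + 2 * e \<and>
             path_weight t rs u ks = (1 - t) ^ length ks * t ^ e"
  using assms
proof (induction ks arbitrary: u)
  case Nil
  then show ?case by simp
next
  case (Cons k ks)
  define v where "v = u \<circ> transp (rs ! k)"
  define c where "c = rect_count u (fst (rs ! k)) (snd (rs ! k)) (u (fst (rs ! k))) (u (snd (rs ! k)))"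
  have r: "1 \<le> fst (rs ! k)" "fst (rs ! k) < snd (rs ! k)" "snd (rs ! k) \<le> n"
    using valid_chain_nth[OF Cons.prems(2)] Cons.prems(3) by auto
  have v: "v permutes {1..n}" unfolding v_def using permutes_comp_transpose[OF Cons.prems(1)] r by simp
  have "perm_len n v = perm_len n u + 2 * c + 1"
    unfolding v_def c_def using Cons.prems(4) by (intro perm_len_comp_transpose[OF permutes_inj_on[OF Cons.prems(1)] r]) simp
  moreover have "set ks \<subseteq> {..<length rs}" "ascending rs v ks"
    using Cons.prems(3,4) by (simp_all add: v_def)
  then obtain e where "perm_len n (trans_prod v rs ks) = perm_len n v + length ks + 2 * e"
    "path_weight t rs v ks = (1 - t) ^ length ks * t ^ e"
    using Cons.IH[OF v Cons.prems(2)] by blast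
  ultimately show ?case
    by (intro exI[of _ "c + e"]) (simp add: v_def c_def cover_weight_def power_add mult_ac)
qed

definition fiber_term :: "'a::comm_ring_1 \<Rightarrow> nat \<Rightarrow> (nat \<Rightarrow> nat) \<Rightarrow> (nat \<Rightarrow> nat) \<Rightarrow> nat set \<Rightarrow> 'a" where
  "fiber_term t n mu w T = (-1) ^ perm_len n (wT n mu w T)
     * t ^ ((perm_len n w + perm_len n (wT n mu w T) - card T) div 2) * (t - 1) ^ card T"

lemma fiber_term_eq_path_weight:
  fixes t :: "'a::comm_ring_1"
  assumes "w permutes {1..n}" "valid_chain n (alcove_chain n mu)" "finite T"
    "T \<subseteq> {..<length (alcove_chain n mu)}" "ascending (alcove_chain n mu) w (sorted_list_of_set T)"
  shows "fiber_term t n mu w T = (- t) ^ perm_len n w * path_weight t (alcove_chain n mu) w (sorted_list_of_set T)"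
proof -
  define ks where "ks = sorted_list_of_set T"
  obtain e where e: "perm_len n (wT n mu w T) = perm_len n w + card T + 2 * e"
    "path_weight t (alcove_chain n mu) w ks = (1 - t) ^ card T * t ^ e"
    using perm_len_trans_prod[of w n "alcove_chain n mu" ks t] assms unfolding ks_def wT_def by auto
  have "(-1::'a) ^ (perm_len n w + card T + 2 * e) * t ^ (perm_len n w + e) * (t - 1) ^ card T
      = ((-1) ^ perm_len n w * t ^ perm_len n w) * (((-1) ^ card T * (t - 1) ^ card T) * t ^ e)"
    by (simp add: power_add power_mult[of "-1::'a" 2 e] mult_ac)
  also have "\<dots> = (- t) ^ perm_len n w * ((1 - t) ^ card T * t ^ e)"
    by (simp add: power_minus[symmetric] power_mult_distrib[symmetric])
  finally show ?thesis using e unfolding fiber_term_def ks_def by simp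
qed

lemma checks_along_iff_prefixes:
  assumes "sorted_wrt (<) ks" "\<forall>x\<in>set ks. p \<le> x \<and> x < length rs"
  shows "checks_along chk rs p u ks
     \<longleftrightarrow> (\<forall>q. p \<le> q \<and> q \<le> length rs \<longrightarrow> chk q (trans_prod u rs (filter (\<lambda>k. k < q) ks)))"
  using assms
proof (induction ks arbitrary: p u)
  case Nil
  then show ?case by simp
next
  case (Cons k ks)
  have IH: "checks_along chk rs (Suc k) (u \<circ> transp (rs ! k)) ks \<longleftrightarrow> (\<forall>q. Suc k \<le> q \<and> q \<le> length rs \<longrightarrow>
      chk q (trans_prod (u \<circ> transp (rs ! k)) rs (filter (\<lambda>k. k < q) ks)))"
    using Cons by (intro Cons.IH) auto
  have before: "filter (\<lambda>x. x < q) (k # ks) = []" if "q \<le> k" for q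
    using Cons.prems that by (auto simp: filter_empty_conv)
  have after: "filter (\<lambda>x. x < q) (k # ks) = k # filter (\<lambda>x. x < q) ks" if "k < q" for q
    using that by simp
  have pk: "p \<le> k" "k < length rs" using Cons.prems by auto
  show ?case
    unfolding checks_along.simps IH
  proof safe
    fix q assume A: "\<forall>q. p \<le> q \<and> q \<le> k \<longrightarrow> chk q u"
      "\<forall>q. Suc k \<le> q \<and> q \<le> length rs \<longrightarrow> chk q (trans_prod (u \<circ> transp (rs ! k)) rs (filter (\<lambda>k. k < q) ks))"
      "p \<le> q" "q \<le> length rs"
    show "chk q (trans_prod u rs (filter (\<lambda>k. k < q) (k # ks)))"
      using A before after[of q] by (cases "q \<le> k") auto
  next
    fix q assume A: "\<forall>q. p \<le> q \<and> q \<le> length rs \<longrightarrow> chk q (trans_prod u rs (filter (\<lambda>k. k < q) (k # ks)))"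
    show "chk q u" if "p \<le> q" "q \<le> k"
      using A before[of q] pk that by force
    show "chk q (trans_prod (u \<circ> transp (rs ! k)) rs (filter (\<lambda>k. k < q) ks))" if "Suc k \<le> q" "q \<le> length rs"
      using A[rule_format, of q] after[of q] pk that by simp
  qed
qed

definition column_check :: "nat \<Rightarrow> (nat \<Rightarrow> nat) \<Rightarrow> (nat \<Rightarrow> nat \<Rightarrow> nat) \<Rightarrow> nat \<Rightarrow> (nat \<Rightarrow> nat) \<Rightarrow> bool"
  where "column_check n mu \<sigma> q v = (\<forall>j. 1 \<le> j \<and> j \<le> mu 1 \<and> block_end n mu j = q \<longrightarrow>
     (\<forall>i. in_shape n mu i j \<longrightarrow> v i = \<sigma> i j))"

locale chain_blocks =
  fixes n :: nat and mu :: "nat \<Rightarrow> nat"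
  assumes valid: "valid_chain n (alcove_chain n mu)"
    and block_end_le: "\<And>j. 1 \<le> j \<Longrightarrow> j \<le> mu 1 \<Longrightarrow> block_end n mu j \<le> length (alcove_chain n mu)"
    and in_shape_col: "\<And>i j. in_shape n mu i j \<Longrightarrow> 1 \<le> j \<and> j \<le> mu 1"
begin

lemma fiber_iff_ascending_checks:
  assumes w: "w permutes {1..n}" and T: "T \<subseteq> {..<length (alcove_chain n mu)}"
  shows "(w,T) \<in> fiber n mu \<sigma> \<longleftrightarrow> ascending (alcove_chain n mu) w (sorted_list_of_set T) \<and>
    checks_along (column_check n mu \<sigma>) (alcove_chain n mu) 0 w (sorted_list_of_set T)"
proof -
  define rs where "rs = alcove_chain n mu"
  define ks where "ks = sorted_list_of_set T"
  have "finite T" using T finite_subset by blast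
  then have ks: "set ks = T" "sorted_wrt (<) ks" by (simp_all add: ks_def)
  then have ks_rs: "set ks \<subseteq> {..<length rs}" using T by (simp add: rs_def)
  have "(w,T) \<in> admissible n mu \<longleftrightarrow> ascending rs w ks"
    using bruhat_chain_iff_ascending[OF w valid[folded rs_def] ks_rs] w T
    unfolding admissible_def ks_def rs_def by (simp add: Let_def)
  moreover have "checks_along (column_check n mu \<sigma>) rs 0 w ks
      \<longleftrightarrow> (\<forall>q\<le>length rs. column_check n mu \<sigma> q (trans_prod w rs (filter (\<lambda>k. k < q) ks)))"
    using checks_along_iff_prefixes[OF ks(2)] ks_rs by (simp add: subset_iff)
  moreover have "\<dots> \<longleftrightarrow> (\<forall>i j. in_shape n mu i j \<longrightarrow> pi_j n mu w T j i = \<sigma> i j)"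
    using block_end_le in_shape_col
    unfolding column_check_def pi_j_def ks_def rs_def by (auto 0 4)
  ultimately show ?thesis unfolding fiber_def ks_def rs_def by auto
qed

lemma fiber_sum_eq_checked_sum:
  fixes t :: "'a::comm_ring_1" and \<sigma> :: "nat \<Rightarrow> nat \<Rightarrow> nat"
  defines "rs \<equiv> alcove_chain n mu" and "chk \<equiv> column_check n mu \<sigma>"
  shows "(\<Sum>(w,T)\<in>fiber n mu \<sigma>. fiber_term t n mu w T)
       = (\<Sum>w | w permutes {1..n}. (- t) ^ perm_len n w *
            checked_sum t (\<lambda>v. if chk (length rs) v then 1 else 0) chk rs 0 w)"
proof -
  define P where "P = {w. w permutes {1..n}}"
  define F where "F = (\<lambda>w T. if ascending rs w (sorted_list_of_set T) \<and> checks_along chk rs 0 w (sorted_list_of_set T)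
                 then path_weight t rs w (sorted_list_of_set T) else 0)"
  have "finite P" unfolding P_def by (rule finite_permutations) simp
  have sub: "fiber n mu \<sigma> \<subseteq> P \<times> Pow {0..<length rs}"
    unfolding fiber_def admissible_def P_def rs_def by auto
  have pointwise: "(if x \<in> fiber n mu \<sigma> then case_prod (fiber_term t n mu) x else 0)
      = (case x of (w,T) \<Rightarrow> (-t) ^ perm_len n w * F w T)"
    if "x \<in> P \<times> Pow {0..<length rs}" for x
    using that fiber_iff_ascending_checks fiber_term_eq_path_weight[of _ n mu _ t] valid
      finite_subset[OF _ finite_atLeastLessThan]
    unfolding F_def P_def rs_def chk_def by (auto simp: lessThan_atLeast0)
  have "(\<Sum>(w,T)\<in>fiber n mu \<sigma>. fiber_term t n mu w T)
      = (\<Sum>x\<in>P \<times> Pow {0..<length rs}. if x \<in> fiber n mu \<sigma> then case_prod (fiber_term t n mu) x else 0)"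
    using sub \<open>finite P\<close> by (simp add: sum.inter_restrict[symmetric] Int_absorb1)
  also have "\<dots> = (\<Sum>(w,T)\<in>P \<times> Pow {0..<length rs}. (-t) ^ perm_len n w * F w T)"
    by (rule sum.cong[OF refl pointwise])
  also have "\<dots> = (\<Sum>w\<in>P. (-t) ^ perm_len n w * (\<Sum>T\<in>Pow {0..<length rs}. F w T))"
    by (simp add: sum.cartesian_product sum_distrib_left)
  also have "\<dots> = (\<Sum>w\<in>P. (-t) ^ perm_len n w * checked_sum t (\<lambda>v. if chk (length rs) v then 1 else 0) chk rs 0 w)"
    unfolding F_def sum_subsets_eq_checked_sum[of 0 rs, simplified] ..
  finally show ?thesis unfolding P_def .
qed

end

lemma checked_sum_append:
  "checked_sum t E chk (xs @ ys) p u = checked_sum t (checked_sum t E chk ys (p + length xs)) chk xs p u"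
  by (induction xs arbitrary: p u) auto

lemma checked_sum_eq_path_sum:
  assumes "\<forall>q v. p \<le> q \<and> q < p + length xs \<longrightarrow> chk q v"
  shows "checked_sum t E chk xs p u = path_sum t E xs u"
  using assms
proof (induction xs arbitrary: p u)
  case Nil
  then show ?case by simp
next
  case (Cons r xs)
  have "chk p u" using Cons.prems by auto
  moreover have "checked_sum t E chk xs (Suc p) v = path_sum t E xs v" for v
    using Cons.prems by (intro Cons.IH) auto
  ultimately show ?case by simp
qed

lemma checked_sum_block:
  assumes "xs \<noteq> []" "\<forall>q v. p < q \<and> q < p + length xs \<longrightarrow> chk q v"
  shows "checked_sum t E chk xs p u = (if chk p u then path_sum t E xs u else 0)"
proof -
  obtain r ys where xs: "xs = r # ys" using assms(1) by (cases xs) auto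
  have "checked_sum t E chk ys (Suc p) v = path_sum t E ys v" for v
    using assms(2) xs by (intro checked_sum_eq_path_sum) auto
  then show ?thesis unfolding xs by simp
qed

lemma path_sum_append: "path_sum t E (xs @ ys) u = path_sum t (path_sum t E ys) xs u"
  by (induction xs arbitrary: u) auto

lemma path_sum_cong:
  assumes "valid_chain n xs" "u permutes {1..n}" "\<And>v. v permutes {1..n} \<Longrightarrow> E v = E' v"
  shows "path_sum t E xs u = path_sum t E' xs u"
  using assms(1,2)
proof (induction xs arbitrary: u)
  case Nil
  then show ?case using assms(3) by simp
next
  case (Cons r xs)
  then have "valid_chain n xs" "u \<circ> transp r permutes {1..n}"
    using permutes_comp_transpose[OF Cons.prems(2)] by (auto simp: valid_chain_def)
  then show ?case using Cons by simp
qed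

lemma path_sum_eq_0_if_untouched:
  assumes "\<forall>r\<in>set xs. fst r \<noteq> c \<and> snd r \<noteq> c" "\<And>w. w c \<noteq> a \<Longrightarrow> E w = 0" "v c \<noteq> a"
  shows "path_sum t E xs v = 0"
  using assms(1,3) by (induction xs arbitrary: v) (simp_all add: assms(2))

section \<open>One row of a chain block\<close>

definition row_chain :: "nat \<Rightarrow> nat \<Rightarrow> nat \<Rightarrow> (nat \<times> nat) list" where
  "row_chain n i l = map (\<lambda>l'. (i, l')) [l..<Suc n]"

lemma row_chain_Cons: "l \<le> n \<Longrightarrow> row_chain n i l = (i, l) # row_chain n i (Suc l)"
  unfolding row_chain_def by (simp add: upt_conv_Cons)

lemma row_chain_Nil: "row_chain n i (Suc n) = []"
  unfolding row_chain_def by simp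

lemma rect_count_Suc:
  "rect_count u i (Suc l) x y = rect_count u i l x y + (if i < l \<and> x < u l \<and> u l < y then 1 else 0)"
proof -
  have "finite {c. i < c \<and> c < l \<and> x < u c \<and> u c < y}" by (rule finite_subset[of _ "{..<l}"]) auto
  moreover have "{c. i < c \<and> c < Suc l \<and> x < u c \<and> u c < y}
      = (if i < l \<and> x < u l \<and> u l < y then insert l else id) {c. i < c \<and> c < l \<and> x < u c \<and> u c < y}"
    by (auto simp: less_Suc_eq)
  ultimately show ?thesis unfolding rect_count_def by simp
qed

lemma rect_count_split:
  assumes "x < y" "y < z" "\<forall>c. i < c \<and> c < l \<longrightarrow> u c \<noteq> y"
  shows "rect_count u i l x z = rect_count u i l x y + rect_count u i l y z"
proof -
  have "{c. i < c \<and> c < l \<and> x < u c \<and> u c < z} =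
         {c. i < c \<and> c < l \<and> x < u c \<and> u c < y} \<union> {c. i < c \<and> c < l \<and> y < u c \<and> u c < z}"
    using assms by (auto dest: spec[where x = c for c])
  moreover have "finite {c. i < c \<and> c < l \<and> x < u c \<and> u c < y}" "finite {c. i < c \<and> c < l \<and> y < u c \<and> u c < z}"
    by (rule finite_subset[of _ "{..<l}"], auto)+
  ultimately show ?thesis unfolding rect_count_def by (simp add: card_Un_disjoint disjoint_iff)
qed

text \<open>The value of \<^term>\<open>path_sum\<close> along \<^term>\<open>row_chain n i l\<close> when the end weight only asks
  for the value \<open>V\<close> to arrive at position \<open>i\<close>: the many ways of raising \<open>u i\<close> to \<open>V\<close> by
  transpositions \<open>(i,l')\<close> telescope into a single term.\<close>

definition row_value :: "'a::comm_ring_1 \<Rightarrow> 'a \<Rightarrow> nat \<Rightarrow> nat \<Rightarrow> nat \<Rightarrow> nat \<Rightarrow> (nat \<Rightarrow> nat) \<Rightarrow> 'a" where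
  "row_value t C V i n l u = (if u i = V then C else if V < u i then 0
     else if (\<exists>L. l \<le> L \<and> L \<le> n \<and> u L = V) then C * ((1 - t) * t ^ rect_count u i l (u i) V) else 0)"

lemma row_value_absent:
  assumes "u i \<noteq> V" "\<forall>L. l \<le> L \<and> L \<le> n \<longrightarrow> u L \<noteq> V"
  shows "row_value t C V i n l u = 0"
  using assms unfolding row_value_def by auto

lemma row_value_step_raise:
  fixes t :: "'a::comm_ring_1"
  assumes u: "inj_on u {1..n}" and il: "1 \<le> i" "i < l" "l < L" "L \<le> n"
    and order: "u i < u l" "u l < V" "u L = V"
  shows "row_value t C V i n l u = row_value t C V i n (Suc l) u
     + cover_weight t u (i, l) * row_value t C V i n (Suc l) (u \<circ> transpose i l)"
proof -
  define u' where "u' = u \<circ> transpose i l"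
  define m where "m = rect_count u i l (u i) (u l)"
  define h where "h = rect_count u i l (u l) V"
  have "u c \<noteq> u l" if "i < c" "c < l" for c
    using that il inj_onD[OF u, of c l] by auto
  then have split: "rect_count u i l (u i) V = m + h"
    unfolding m_def h_def using order by (intro rect_count_split) auto
  have "rect_count u' i (Suc l) (u' i) V = h"
    unfolding rect_count_def h_def u'_def using order il
    by (intro arg_cong[where f = card]) (auto simp: less_Suc_eq transpose_def)
  moreover have "u' i = u l" "u' L = V" using il order by (simp_all add: u'_def)
  ultimately have r1: "row_value t C V i n (Suc l) u' = C * ((1 - t) * t ^ h)"
    using il order unfolding row_value_def by auto
  moreover have r2: "row_value t C V i n (Suc l) u = C * ((1 - t) * t ^ (m + h + 1))"
    using il order split unfolding row_value_def by (auto simp: rect_count_Suc)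
  moreover have r3: "row_value t C V i n l u = C * ((1 - t) * t ^ (m + h))"
    using il order split unfolding row_value_def by auto
  moreover have cw: "cover_weight t u (i, l) = (1 - t) * t ^ m"
    by (simp add: cover_weight_def m_def)
  ultimately show ?thesis
    unfolding u'_def[symmetric] r1 r2 r3 cw by (simp add: power_add algebra_simps)
qed

lemma row_value_step:
  fixes t :: "'a::comm_ring_1"
  assumes u: "u permutes {1..n}" and il: "1 \<le> i" "i < l" "l \<le> n"
  shows "row_value t C V i n l u = row_value t C V i n (Suc l) u
     + (if u i < u l then cover_weight t u (i, l) * row_value t C V i n (Suc l) (u \<circ> transpose i l) else 0)"
proof -
  define u' where "u' = u \<circ> transpose i l"
  have inj: "inj_on u {1..n}" using u by (rule permutes_inj_on)
  have u': "u' i = u l" "u' l = u i" "\<And>c. c \<noteq> i \<Longrightarrow> c \<noteq> l \<Longrightarrow> u' c = u c"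
    by (simp_all add: u'_def)
  have "u i \<noteq> u l" using inj il by (auto dest: inj_onD)
  consider "u i = V" | "V < u i" | "u i < V" "u l = V"
    | L where "u i < V" "u l \<noteq> V" "l < L" "L \<le> n" "u L = V"
    | "u i < V" "\<forall>L. l \<le> L \<and> L \<le> n \<longrightarrow> u L \<noteq> V"
    by (metis le_neq_implies_less linorder_neqE_nat)
  then show ?thesis
  proof cases
    case 1
    then show ?thesis using u' \<open>u i \<noteq> u l\<close> unfolding u'_def[symmetric] row_value_def by auto
  next
    case 2
    then show ?thesis using u' unfolding u'_def[symmetric] row_value_def by auto
  next
    case 3
    have "\<not> (\<exists>L. Suc l \<le> L \<and> L \<le> n \<and> u L = V)"
    proof
      assume "\<exists>L. Suc l \<le> L \<and> L \<le> n \<and> u L = V"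
      then obtain L where "Suc l \<le> L" "L \<le> n" "u L = u l" using 3 by auto
      then show False using inj_onD[OF inj, of L l] il by auto
    qed
    then show ?thesis
      using 3 u' il unfolding u'_def[symmetric] row_value_def cover_weight_def by (auto simp: mult_ac)
  next
    case (4 L)
    show ?thesis
    proof (cases "u i < u l \<and> u l < V")
      case True
      then show ?thesis using row_value_step_raise[OF inj il(1,2) 4(3,4) _ _ 4(5)] by simp
    next
      case False
      then have "row_value t C V i n (Suc l) u' = 0" if "u i < u l" using that 4 u'
        unfolding row_value_def by auto
      then show ?thesis using False 4 unfolding u'_def[symmetric] row_value_def rect_count_Suc by auto
    qed
  next
    case 5
    then have "\<forall>L. Suc l \<le> L \<and> L \<le> n \<longrightarrow> u L \<noteq> V" "\<forall>L. Suc l \<le> L \<and> L \<le> n \<longrightarrow> u' L \<noteq> V"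
      "u' i \<noteq> V" using u' il by auto
    with 5 have "row_value t C V i n l u = 0" "row_value t C V i n (Suc l) u = 0"
      "row_value t C V i n (Suc l) u' = 0"
      by (simp_all add: row_value_absent)
    then show ?thesis unfolding u'_def[symmetric] by simp
  qed
qed

lemma path_sum_row_chain:
  fixes t :: "'a::comm_ring_1"
  assumes i: "1 \<le> i" "i \<le> K"
    and E: "\<And>w. w permutes {1..n} \<Longrightarrow> \<forall>c. 1 \<le> c \<and> c \<le> K \<and> c \<noteq> i \<longrightarrow> w c = u\<^sub>0 c \<Longrightarrow>
      E w = (if w i = V then C else 0)"
    and l: "K < l" "l \<le> Suc n"
    and u: "u permutes {1..n}" "\<forall>c. 1 \<le> c \<and> c \<le> K \<and> c \<noteq> i \<longrightarrow> u c = u\<^sub>0 c"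
  shows "path_sum t E (row_chain n i l) u = row_value t C V i n l u"
  using l u
proof (induction "Suc n - l" arbitrary: l u)
  case 0
  then have "l = Suc n" by simp
  then show ?case using E 0 by (auto simp: row_chain_Nil row_value_def)
next
  case (Suc d)
  have il: "i < l" "l \<le> n" using Suc i by auto
  define w where "w = u \<circ> transpose i l"
  have w: "w permutes {1..n}" "\<forall>c. 1 \<le> c \<and> c \<le> K \<and> c \<noteq> i \<longrightarrow> w c = u\<^sub>0 c"
    using permutes_comp_transpose[OF Suc.prems(3), of i l] Suc.prems i il by (auto simp: w_def)
  have IH: "path_sum t E (row_chain n i (Suc l)) v = row_value t C V i n (Suc l) v"
    if "v permutes {1..n}" "\<forall>c. 1 \<le> c \<and> c \<le> K \<and> c \<noteq> i \<longrightarrow> v c = u\<^sub>0 c" for v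
    using Suc that by (intro Suc.hyps) auto
  show ?case
    unfolding row_chain_Cons[OF il(2)] row_value_step[OF Suc.prems(3) i(1) il] w_def[symmetric]
    using IH[OF Suc.prems(3,4)] IH[OF w] by (simp add: w_def[symmetric])
qed

definition rows_chain :: "nat \<Rightarrow> nat \<Rightarrow> nat \<Rightarrow> nat \<Rightarrow> (nat \<times> nat) list" where
  "rows_chain n K i k = concat (map (\<lambda>i'. row_chain n i' (Suc K)) [i..<Suc k])"

lemma rows_chain_Cons: "i \<le> k \<Longrightarrow> rows_chain n K i k = row_chain n i (Suc K) @ rows_chain n K (Suc i) k"
  unfolding rows_chain_def by (subst upt_conv_Cons) auto

lemma rows_chain_mem: "r \<in> set (rows_chain n K i k) \<Longrightarrow> i \<le> fst r \<and> K < snd r"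
  unfolding rows_chain_def row_chain_def by auto

definition row_factor :: "'a::comm_ring_1 \<Rightarrow> (nat \<Rightarrow> nat) \<Rightarrow> (nat \<Rightarrow> nat) \<Rightarrow> nat \<Rightarrow> nat \<Rightarrow> 'a" where
  "row_factor t a b K i = (if a i = b i then 1 else (1 - t) * t ^ rect_count a i (Suc K) (a i) (b i))"

text \<open>In the following lemmas \<open>a\<close> and \<open>b\<close> are consecutive columns of a non-attacking filling,
  of lengths \<open>K\<close> and \<open>k\<close>, and \<open>v\<close> is the permutation reached after rows \<open>1, \<dots>, i - 1\<close> of
  the block have been moved from \<open>a\<close> to \<open>b\<close>.\<close>

lemma row_value_eq_row_factor:
  fixes t :: "'a::comm_ring_1"
  assumes kK: "k \<le> K" and i: "1 \<le> i" "i \<le> k"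
    and ab: "a i \<le> b i" "1 \<le> b i" "b i \<le> n"
    and b_inj: "\<And>c. 1 \<le> c \<Longrightarrow> c < i \<Longrightarrow> b c \<noteq> b i"
    and attack: "\<And>c. i < c \<Longrightarrow> c \<le> K \<Longrightarrow> a c \<noteq> b i"
    and v: "v permutes {1..n}" "\<And>c. 1 \<le> c \<Longrightarrow> c \<le> K \<Longrightarrow> v c = (if c < i then b c else a c)"
  shows "row_value t C (b i) i n (Suc K) v = C * row_factor t a b K i"
proof (cases "a i = b i")
  case True
  then show ?thesis using v(2)[of i] i kK by (simp add: row_value_def row_factor_def)
next
  case False
  obtain p where p: "p \<in> {1..n}" "v p = b i"
    using permutes_image[OF v(1)] ab by (metis atLeastAtMost_iff imageE)
  have "K < p"
  proof (rule ccontr)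
    assume "\<not> K < p"
    then have "p \<le> K" "v p = (if p < i then b p else a p)" using v(2) p by simp_all
    then show False using p b_inj attack False by (cases p i rule: linorder_cases) auto
  qed
  moreover have "rect_count v i (Suc K) (v i) (b i) = rect_count a i (Suc K) (a i) (b i)"
    unfolding rect_count_def using v(2) i by (intro arg_cong[where f = card]) auto
  ultimately show ?thesis
    using False ab p v(2)[of i] i kK unfolding row_value_def row_factor_def by auto
qed

lemma path_sum_rows_chain_eq_0:
  assumes "1 \<le> i" "i \<le> k" "k \<le> K" "w i \<noteq> b i"
    and E: "\<And>w. E w = (if \<forall>c. 1 \<le> c \<and> c \<le> k \<longrightarrow> w c = b c then C else 0)"
  shows "path_sum t E (rows_chain n K (Suc i) k) w = 0"
proof (rule path_sum_eq_0_if_untouched[where c = i and a = "b i"])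
  show "\<forall>r\<in>set (rows_chain n K (Suc i) k). fst r \<noteq> i \<and> snd r \<noteq> i"
    using rows_chain_mem[of _ n K "Suc i" k] assms by fastforce
  show "E w' = 0" if "w' i \<noteq> b i" for w' using that E assms by auto
qed (rule assms(4))

lemma path_sum_rows_chain:
  fixes t :: "'a::comm_ring_1"
  assumes kK: "k \<le> K" and Kn: "K \<le> n"
    and ab: "\<And>i. 1 \<le> i \<Longrightarrow> i \<le> k \<Longrightarrow> a i \<le> b i \<and> 1 \<le> b i \<and> b i \<le> n"
    and b_inj: "\<And>i c. 1 \<le> i \<Longrightarrow> i \<le> k \<Longrightarrow> 1 \<le> c \<Longrightarrow> c \<le> k \<Longrightarrow> i \<noteq> c \<Longrightarrow> b i \<noteq> b c"
    and attack: "\<And>i c. 1 \<le> i \<Longrightarrow> i \<le> k \<Longrightarrow> i < c \<Longrightarrow> c \<le> K \<Longrightarrow> a c \<noteq> b i"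
    and E: "\<And>w. E w = (if \<forall>c. 1 \<le> c \<and> c \<le> k \<longrightarrow> w c = b c then C else 0)"
    and i: "1 \<le> i" "i \<le> Suc k"
    and v: "v permutes {1..n}" "\<And>c. 1 \<le> c \<Longrightarrow> c \<le> K \<Longrightarrow> v c = (if c < i then b c else a c)"
  shows "path_sum t E (rows_chain n K i k) v = C * (\<Prod>i'\<in>{i..k}. row_factor t a b K i')"
  using i v
proof (induction "Suc k - i" arbitrary: i v)
  case 0
  then have "i = Suc k" by simp
  moreover have "\<forall>c. 1 \<le> c \<and> c \<le> k \<longrightarrow> v c = b c" using 0 kK by auto
  ultimately show ?case using E by (simp add: rows_chain_def)
next
  case (Suc d)
  have ik: "i \<le> k" using Suc by simp
  define C' where "C' = C * (\<Prod>i'\<in>{Suc i..k}. row_factor t a b K i')"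
  define E' where "E' = path_sum t E (rows_chain n K (Suc i) k)"
  have IH: "E' w = C'"
    if "w permutes {1..n}" "\<And>c. 1 \<le> c \<Longrightarrow> c \<le> K \<Longrightarrow> w c = (if c < Suc i then b c else a c)" for w
    using Suc that unfolding E'_def C'_def by (intro Suc.hyps) auto
  have E': "E' w = (if w i = b i then C' else 0)"
    if w: "w permutes {1..n}" "\<forall>c. 1 \<le> c \<and> c \<le> K \<and> c \<noteq> i \<longrightarrow> w c = v c" for w
  proof (cases "w i = b i")
    case True
    then show ?thesis using IH[OF w(1)] w(2) Suc.prems by (auto simp: less_Suc_eq)
  next
    case False
    then have "path_sum t E (rows_chain n K (Suc i) k) w = 0"
      using Suc.prems ik kK E by (intro path_sum_rows_chain_eq_0) auto
    then show ?thesis using False unfolding E'_def by simp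
  qed
  have "path_sum t E (rows_chain n K i k) v = path_sum t E' (row_chain n i (Suc K)) v"
    unfolding E'_def by (simp add: rows_chain_Cons[OF ik] path_sum_append)
  also have "\<dots> = row_value t C' (b i) i n (Suc K) v"
    by (rule path_sum_row_chain[where K = K and u\<^sub>0 = v]) (use Suc.prems ik kK Kn E' in auto)
  also have "\<dots> = C' * row_factor t a b K i"
    by (rule row_value_eq_row_factor[OF kK]) (use Suc.prems ik ab b_inj attack in auto)
  also have "\<dots> = C * (\<Prod>i'\<in>{i..k}. row_factor t a b K i')"
    unfolding C'_def using prod.atLeast_Suc_atMost[OF ik, of "row_factor t a b K"] by (simp add: mult_ac)
  finally show ?case .
qed

lemma valid_chain_concat: "valid_chain n (concat xs) \<longleftrightarrow> (\<forall>x\<in>set xs. valid_chain n x)"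
  unfolding valid_chain_def by auto

lemma valid_rows_chain: "k \<le> K \<Longrightarrow> K \<le> n \<Longrightarrow> valid_chain n (rows_chain n K 1 k)"
  unfolding valid_chain_def rows_chain_def row_chain_def by auto

lemma rows_chain_nonempty: "1 \<le> k \<Longrightarrow> K < n \<Longrightarrow> rows_chain n K 1 k \<noteq> []"
  unfolding rows_chain_def row_chain_def by auto

section \<open>The staircase shape \<open>\<lambda> + \<rho>\<close> and its alcove chain\<close>

locale staircase =
  fixes n :: nat and lam :: "nat \<Rightarrow> nat"
  assumes two_le_n: "2 \<le> n"
    and lam_mono: "\<And>i. 1 \<le> i \<Longrightarrow> i < n \<Longrightarrow> lam (Suc i) \<le> lam i"
    and lam_n: "lam n = 0"
begin

abbreviation "mu \<equiv> lam_rho n lam"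
abbreviation "cp j \<equiv> conj_part n mu j"
abbreviation "M \<equiv> mu 1"
abbreviation "cb j \<equiv> chain_block n mu j"
abbreviation "be j \<equiv> block_end n mu j"

lemma lam_anti:
  assumes "1 \<le> i" "i \<le> i'" "i' \<le> n"
  shows "lam i' \<le> lam i"
  using assms(2,3)
proof (induction i' rule: dec_induct)
  case (step m)
  then show ?case using lam_mono[of m] assms(1) by simp
qed simp

lemma mu_strict_anti: "1 \<le> i \<Longrightarrow> i < i' \<Longrightarrow> i' \<le> n \<Longrightarrow> mu i' < mu i"
  using lam_anti[of i i'] by (simp add: lam_rho_def)

lemma mu_anti: "1 \<le> i \<Longrightarrow> i \<le> i' \<Longrightarrow> i' \<le> n \<Longrightarrow> mu i' \<le> mu i"
  using mu_strict_anti[of i i'] by (cases "i = i'") auto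

lemma mu_1_pos: "1 \<le> M"
  using two_le_n by (simp add: lam_rho_def)

lemma rows_reaching_eq: "1 \<le> j \<Longrightarrow> {i\<in>{1..n}. j \<le> mu i} = {1..cp j}"
proof -
  assume j: "1 \<le> j"
  define S where "S = {i\<in>{1..n}. j \<le> mu i}"
  have "S = {1..Max S}" if "S \<noteq> {}"
  proof
    have "finite S" by (simp add: S_def)
    then show "S \<subseteq> {1..Max S}" by (auto simp: S_def)
    have "Max S \<in> S" using \<open>finite S\<close> that by simp
    show "{1..Max S} \<subseteq> S"
    proof
      fix i assume "i \<in> {1..Max S}"
      moreover have "mu (Max S) \<le> mu i" using \<open>Max S \<in> S\<close> \<open>i \<in> {1..Max S}\<close> by (intro mu_anti) (auto simp: S_def)
      ultimately show "i \<in> S" using \<open>Max S \<in> S\<close> by (auto simp: S_def)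
    qed
  qed
  then have "S = {1..card S}" by (cases "S = {}") (simp, metis card_atLeastAtMost diff_Suc_1)
  then show ?thesis by (simp add: S_def conj_part_def)
qed

lemma in_shape_iff: "in_shape n mu i j \<longleftrightarrow> 1 \<le> j \<and> 1 \<le> i \<and> i \<le> cp j"
proof (cases "1 \<le> j")
  case True
  have "in_shape n mu i j \<longleftrightarrow> i \<in> {i\<in>{1..n}. j \<le> mu i}" using True by (auto simp: in_shape_def)
  then show ?thesis unfolding rows_reaching_eq[OF True] using True by simp
qed (simp add: in_shape_def)

lemma rows_reaching_subset: "1 \<le> j \<Longrightarrow> {i\<in>{1..n}. j \<le> mu i} \<subseteq> {1..n-1}"
proof
  fix i assume "1 \<le> j" "i \<in> {i\<in>{1..n}. j \<le> mu i}"
  moreover have "mu n = 0" using lam_n by (simp add: lam_rho_def)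
  ultimately show "i \<in> {1..n-1}" by (cases "i = n") auto
qed

lemma conj_part_le: "1 \<le> j \<Longrightarrow> cp j \<le> n - 1"
  using card_mono[OF _ rows_reaching_subset] by (simp add: conj_part_def)

lemma conj_part_anti: "1 \<le> j \<Longrightarrow> j \<le> j' \<Longrightarrow> cp j' \<le> cp j"
  unfolding conj_part_def by (rule card_mono) auto

lemma conj_part_drop_le_1: "1 \<le> j \<Longrightarrow> cp j \<le> Suc (cp (Suc j))"
proof (rule ccontr)
  assume j: "1 \<le> j" and "\<not> cp j \<le> Suc (cp (Suc j))"
  define a where "a = Suc (cp (Suc j))"
  have "a \<in> {1..cp j}" "Suc a \<in> {1..cp j}" "a \<notin> {1..cp (Suc j)}" "Suc a \<notin> {1..cp (Suc j)}"
    using \<open>\<not> cp j \<le> Suc (cp (Suc j))\<close> by (auto simp: a_def)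
  then have "a \<in> {i\<in>{1..n}. j \<le> mu i}" "Suc a \<in> {i\<in>{1..n}. j \<le> mu i}"
    "a \<notin> {i\<in>{1..n}. Suc j \<le> mu i}" "Suc a \<notin> {i\<in>{1..n}. Suc j \<le> mu i}"
    using rows_reaching_eq[OF j] rows_reaching_eq[of "Suc j"] by auto
  then have "mu a = j" "mu (Suc a) = j" "1 \<le> a" "Suc a \<le> n" by auto
  then show False using mu_strict_anti[of a "Suc a"] by simp
qed

lemma conj_part_1: "cp 1 = n - 1"
proof -
  have "{1..n-1} \<subseteq> {i\<in>{1..n}. 1 \<le> mu i}" by (auto simp: lam_rho_def)
  then have "{i\<in>{1..n}. 1 \<le> mu i} = {1..n-1}" using rows_reaching_subset[of 1] by blast
  then show ?thesis by (simp add: conj_part_def)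
qed

lemma conj_part_pos: "1 \<le> j \<Longrightarrow> j \<le> M \<Longrightarrow> 1 \<le> cp j"
proof -
  assume j: "1 \<le> j" "j \<le> M"
  then have "1 \<in> {i\<in>{1..n}. j \<le> mu i}" using two_le_n by simp
  then show ?thesis unfolding rows_reaching_eq[OF j(1)] by simp
qed

lemma conj_part_M: "cp M = 1"
proof -
  have "{i\<in>{1..n}. M \<le> mu i} = {1}"
  proof (intro equalityI subsetI)
    fix i assume "i \<in> {i\<in>{1..n}. M \<le> mu i}"
    then show "i \<in> {1}" using mu_strict_anti[of 1 i] by (cases "i = 1") auto
  qed (use two_le_n in simp)
  then show ?thesis by (simp add: conj_part_def)
qed

lemma conj_part_beyond: "M < j \<Longrightarrow> cp j = 0"
proof -
  assume "M < j"
  then have "{i\<in>{1..n}. j \<le> mu i} = {}" using mu_anti[of 1] by fastforce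
  then show ?thesis by (simp add: conj_part_def)
qed

lemma in_shape_col_le: "in_shape n mu i j \<Longrightarrow> 1 \<le> j \<and> j \<le> M"
  using conj_part_beyond[of j] by (cases "M < j") (auto simp: in_shape_iff)

lemma chain_block_1: "cb 1 = []"
proof -
  have "(LEAST i. 1 \<le> i \<and> cp i = cp 1) = 1"
    by (rule Least_equality) auto
  then have "cb 1 = gbar' n (cp 1)" by (simp add: chain_block_def)
  also have "\<dots> = []" using two_le_n conj_part_1 by (simp add: gbar'_def)
  finally show ?thesis .
qed

lemma chain_block_eq_rows_chain: "2 \<le> j \<Longrightarrow> cb j = rows_chain n (cp (j - 1)) 1 (cp j)"
proof -
  assume j: "2 \<le> j"
  have a: "cp j \<le> cp (j - 1)" using j by (intro conj_part_anti) auto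
  have b: "cp (j - 1) \<le> Suc (cp j)" using conj_part_drop_le_1[of "j - 1"] j by simp
  show ?thesis
  proof (cases "cp (j - 1) = cp j")
    case True
    have "(LEAST i. 1 \<le> i \<and> cp i = cp j) \<le> j - 1"
      by (rule Least_le) (use True j in auto)
    then have "j \<noteq> (LEAST i. 1 \<le> i \<and> cp i = cp j)" using j by auto
    then have "cb j = gbar n (cp j)" by (simp add: chain_block_def)
    then show ?thesis using True by (simp add: gbar_def rows_chain_def row_chain_def)
  next
    case False
    then have K: "cp (j - 1) = Suc (cp j)" using a b by simp
    have "(LEAST i. 1 \<le> i \<and> cp i = cp j) = j"
    proof (rule Least_equality)
      show "1 \<le> j \<and> cp j = cp j" using j by simp
      fix y assume y: "1 \<le> y \<and> cp y = cp j"
      show "j \<le> y"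
      proof (rule ccontr)
        assume "\<not> j \<le> y"
        then have "cp (j - 1) \<le> cp y" using y by (intro conj_part_anti) auto
        then show False using y K by simp
      qed
    qed
    then have "cb j = gbar' n (cp j)" by (simp add: chain_block_def)
    then show ?thesis using K by (simp add: gbar'_def rows_chain_def row_chain_def)
  qed
qed

lemma valid_chain_block: "1 \<le> j \<Longrightarrow> valid_chain n (cb j)"
proof (cases "j = 1")
  case False
  assume "1 \<le> j"
  then have j: "2 \<le> j" using False by simp
  have "cp j \<le> cp (j - 1)" using j by (intro conj_part_anti) auto
  moreover have "cp (j - 1) \<le> n - 1" using j by (intro conj_part_le) simp
  ultimately show ?thesis using chain_block_eq_rows_chain[OF j] valid_rows_chain by simp
qed (use chain_block_1 in \<open>simp add: valid_chain_def\<close>)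

lemma valid_alcove_chain: "valid_chain n (alcove_chain n mu)"
  unfolding alcove_chain_def valid_chain_concat using valid_chain_block by auto

lemma chain_block_nonempty: "2 \<le> j \<Longrightarrow> j \<le> M \<Longrightarrow> cb j \<noteq> []"
proof -
  assume j: "2 \<le> j" "j \<le> M"
  have "1 \<le> cp j" using j by (intro conj_part_pos) auto
  moreover have "cp (j - 1) \<le> n - 1" using j by (intro conj_part_le) simp
  then have "cp (j - 1) < n" using two_le_n by simp
  ultimately show ?thesis using chain_block_eq_rows_chain[OF j(1)] rows_chain_nonempty by simp
qed

lemma block_end_Suc: "be (Suc j) = be j + length (cb (Suc j))"
  unfolding block_end_def by simp

lemma block_end_1: "be 1 = 0"
  unfolding block_end_def using chain_block_1 by simp

lemma block_end_strict_mono: "1 \<le> j \<Longrightarrow> j < j' \<Longrightarrow> j' \<le> M \<Longrightarrow> be j < be j'"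
proof (induction j' rule: less_induct)
  case (less j')
  obtain j'' where j'': "j' = Suc j''" using less.prems by (cases j') auto
  have "cb j' \<noteq> []" using less.prems by (intro chain_block_nonempty) auto
  then have lt: "be j'' < be j'" using block_end_Suc[of j''] j'' by simp
  show ?case
  proof (cases "j = j''")
    case True then show ?thesis using lt by simp
  next
    case False
    then have "be j < be j''" using less.prems j'' by (intro less.IH) auto
    then show ?thesis using lt by simp
  qed
qed

lemma block_end_mono: "1 \<le> j \<Longrightarrow> j \<le> j' \<Longrightarrow> j' \<le> M \<Longrightarrow> be j \<le> be j'"
  using block_end_strict_mono[of j j'] by (cases "j = j'") auto

lemma length_alcove_chain: "length (alcove_chain n mu) = be M"
  unfolding alcove_chain_def block_end_def by simp

sublocale chain_blocks n mu
  using valid_alcove_chain block_end_mono[of _ M] length_alcove_chain in_shape_col_le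
  by unfold_locales auto

end

locale staircase_filling = staircase +
  fixes \<sigma> :: "nat \<Rightarrow> nat \<Rightarrow> nat"
  assumes filling: "\<sigma> \<in> fillings_F n (lam_rho n lam)"
begin

lemma filling_range: "in_shape n mu i j \<Longrightarrow> 1 \<le> \<sigma> i j \<and> \<sigma> i j \<le> n"
  using filling unfolding fillings_F_def by auto

lemma filling_col_distinct: "in_shape n mu i j \<Longrightarrow> in_shape n mu k j \<Longrightarrow> i \<noteq> k \<Longrightarrow> \<sigma> i j \<noteq> \<sigma> k j"
  using filling unfolding fillings_F_def by blast

lemma filling_no_attack: "in_shape n mu i j \<Longrightarrow> in_shape n mu k (Suc j) \<Longrightarrow> k < i \<Longrightarrow> \<sigma> i j \<noteq> \<sigma> k (Suc j)"
  using filling unfolding fillings_F_def by blast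

lemma filling_row_mono: "in_shape n mu i j \<Longrightarrow> in_shape n mu i (Suc j) \<Longrightarrow> \<sigma> i j \<le> \<sigma> i (Suc j)"
  using filling unfolding fillings_F_def by blast

definition column_matches :: "nat \<Rightarrow> (nat \<Rightarrow> nat) \<Rightarrow> bool" where
  "column_matches j v = (\<forall>i. 1 \<le> i \<and> i \<le> cp j \<longrightarrow> v i = \<sigma> i j)"

lemma column_check_block_end:
  assumes "1 \<le> j" "j \<le> M"
  shows "column_check n mu \<sigma> (be j) v \<longleftrightarrow> column_matches j v"
proof -
  have "(1 \<le> j' \<and> j' \<le> M \<and> be j' = be j) \<longleftrightarrow> j' = j" for j'
    using block_end_strict_mono[of j' j] block_end_strict_mono[of j j'] assms
    by (cases j' j rule: linorder_cases) auto
  then show ?thesis unfolding column_check_def column_matches_def in_shape_iff using assms by auto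
qed

lemma column_check_inside_block:
  assumes "2 \<le> j" "j \<le> M" "be (j - 1) < q" "q < be j"
  shows "column_check n mu \<sigma> q v"
proof -
  have "be j' \<noteq> q" if "1 \<le> j'" "j' \<le> M" for j'
  proof (cases "j' \<le> j - 1")
    case True
    moreover have "j - 1 \<le> M" using assms by simp
    ultimately show ?thesis using block_end_mono[of j' "j - 1"] that assms by simp
  next
    case False
    then have "j \<le> j'" by simp
    then show ?thesis using block_end_mono[of j j'] that assms by simp
  qed
  then show ?thesis unfolding column_check_def by auto
qed

definition column_factor :: "'a::comm_ring_1 \<Rightarrow> nat \<Rightarrow> 'a" where
  "column_factor t j = (\<Prod>i\<in>{1..cp j}. row_factor t (\<lambda>i. \<sigma> i (j - 1)) (\<lambda>i. \<sigma> i j) (cp (j - 1)) i)"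

lemma path_sum_chain_block:
  fixes t :: "'a::comm_ring_1"
  assumes j: "2 \<le> j" "j \<le> M" and u: "u permutes {1..n}" "column_matches (j - 1) u"
    and E: "\<And>w. w permutes {1..n} \<Longrightarrow> E w = (if column_matches j w then C else 0)"
  shows "path_sum t E (cb j) u = C * column_factor t j"
proof -
  define K where "K = cp (j - 1)"
  define k where "k = cp j"
  define a where "a = (\<lambda>i. \<sigma> i (j - 1))"
  define b where "b = (\<lambda>i. \<sigma> i j)"
  have kK: "k \<le> K" unfolding k_def K_def using j by (intro conj_part_anti) auto
  have j1: "1 \<le> j - 1" using j by simp
  then have Kn: "K \<le> n" unfolding K_def using conj_part_le[of "j - 1"] by simp
  have jj: "Suc (j - 1) = j" using j by simp
  have shK: "in_shape n mu i (j - 1) \<longleftrightarrow> 1 \<le> i \<and> i \<le> K" for i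
    unfolding in_shape_iff K_def using j1 by simp
  have shk: "in_shape n mu i j \<longleftrightarrow> 1 \<le> i \<and> i \<le> k" for i
    unfolding in_shape_iff k_def using j by simp
  have "path_sum t E (cb j) u = path_sum t (\<lambda>w. if column_matches j w then C else 0) (cb j) u"
    using j by (intro path_sum_cong[OF valid_chain_block u(1)]) (simp_all add: E)
  also have "\<dots> = path_sum t (\<lambda>w. if column_matches j w then C else 0) (rows_chain n K 1 k) u"
    unfolding K_def k_def chain_block_eq_rows_chain[OF j(1)] ..
  also have "\<dots> = C * (\<Prod>i\<in>{1..k}. row_factor t a b K i)"
  proof (rule path_sum_rows_chain[OF kK Kn])
    show "a i \<le> b i \<and> 1 \<le> b i \<and> b i \<le> n" if "1 \<le> i" "i \<le> k" for i
      using filling_row_mono[of i "j - 1"] filling_range[of i j] shK shk that kK jj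
      unfolding a_def b_def by auto
    show "b i \<noteq> b c" if "1 \<le> i" "i \<le> k" "1 \<le> c" "c \<le> k" "i \<noteq> c" for i c
      using filling_col_distinct shk that unfolding b_def by blast
    show "a c \<noteq> b i" if "1 \<le> i" "i \<le> k" "i < c" "c \<le> K" for i c
      using filling_no_attack[of c "j - 1" i] shK shk that jj unfolding a_def b_def by auto
    show "u c = (if c < 1 then b c else a c)" if "1 \<le> c" "c \<le> K" for c
      using u(2) that unfolding column_matches_def a_def K_def by auto
  qed (use u(1) in \<open>auto simp: column_matches_def b_def k_def\<close>)
  finally show ?thesis unfolding column_factor_def K_def k_def a_def b_def .
qed

definition chain_from :: "nat \<Rightarrow> (nat \<times> nat) list" where
  "chain_from j = concat (map (\<lambda>j. cb j) [j..<Suc M])"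

lemma checked_sum_chain_from:
  fixes t :: "'a::comm_ring_1"
  defines "E \<equiv> \<lambda>v. if column_check n mu \<sigma> (length (alcove_chain n mu)) v then 1 else 0"
  assumes "2 \<le> j" "j \<le> Suc M" "u permutes {1..n}"
  shows "checked_sum t E (column_check n mu \<sigma>) (chain_from j) (be (j - 1)) u
       = (if column_matches (j - 1) u then (\<Prod>j'\<in>{j..M}. column_factor t j') else 0)"
  using assms(2-)
proof (induction "Suc M - j" arbitrary: j u)
  case 0
  then have "j = Suc M" by simp
  moreover have "column_check n mu \<sigma> (length (alcove_chain n mu)) u \<longleftrightarrow> column_matches M u"
    unfolding length_alcove_chain using mu_1_pos by (intro column_check_block_end) auto
  ultimately show ?case by (simp add: chain_from_def E_def)
next
  case (Suc d)
  have j: "2 \<le> j" "j \<le> M" using Suc by auto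
  define C where "C = (\<Prod>j'\<in>{Suc j..M}. column_factor t j')"
  define E' where "E' = checked_sum t E (column_check n mu \<sigma>) (chain_from (Suc j)) (be j)"
  have IH: "E' w = (if column_matches j w then C else 0)" if "w permutes {1..n}" for w
    using Suc.hyps(1)[of "Suc j"] Suc.hyps(2) Suc.prems that unfolding E'_def C_def by simp
  have block_end: "be (j - 1) + length (cb j) = be j" using block_end_Suc[of "j - 1"] j by simp
  have "chain_from j = cb j @ chain_from (Suc j)"
    using j unfolding chain_from_def by (subst upt_conv_Cons) auto
  then have "checked_sum t E (column_check n mu \<sigma>) (chain_from j) (be (j - 1)) u
      = checked_sum t E' (column_check n mu \<sigma>) (cb j) (be (j - 1)) u"
    unfolding E'_def by (simp only: checked_sum_append block_end)
  also have "\<dots> = (if column_check n mu \<sigma> (be (j - 1)) u then path_sum t E' (cb j) u else 0)"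
    using chain_block_nonempty[OF j] column_check_inside_block[OF j] block_end
    by (intro checked_sum_block) auto
  also have "\<dots> = (if column_matches (j - 1) u then C * column_factor t j else 0)"
    using column_check_block_end[of "j - 1"] path_sum_chain_block[OF j Suc.prems(3) _ IH] j by auto
  also have "\<dots> = (if column_matches (j - 1) u then (\<Prod>j'\<in>{j..M}. column_factor t j') else 0)"
    unfolding C_def using prod.atLeast_Suc_atMost[OF j(2), of "column_factor t"] by (simp add: mult.commute)
  finally show ?case .
qed

section \<open>The first column\<close>

abbreviation "a\<^sub>0 \<equiv> missing_entry n mu \<sigma>"

lemma in_shape_1_iff: "in_shape n mu i 1 \<longleftrightarrow> 1 \<le> i \<and> i \<le> n - 1"
  unfolding in_shape_iff conj_part_1 by simp

lemma first_column_inj: "inj_on (\<lambda>i. \<sigma> i 1) {1..n-1}"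
  using filling_col_distinct in_shape_1_iff by (intro inj_onI) (metis atLeastAtMost_iff)

lemma first_column_image: "(\<lambda>i. \<sigma> i 1) ` {1..n-1} = {1..n} - {a\<^sub>0}" "a\<^sub>0 \<in> {1..n}"
proof -
  define I where "I = (\<lambda>i. \<sigma> i 1) ` {1..n-1}"
  have "I \<subseteq> {1..n}" using filling_range in_shape_1_iff by (auto simp: I_def)
  moreover have "card I = n - 1" using card_image[OF first_column_inj] by (simp add: I_def)
  ultimately have "card ({1..n} - I) = 1" using two_le_n by (simp add: card_Diff_subset finite_subset)
  then obtain a where a: "{1..n} - I = {a}" by (rule card_1_singletonE)
  have "a\<^sub>0 = a"
    unfolding missing_entry_def
  proof (rule the_equality)
    have "a \<in> {1..n}" "a \<notin> I" using a by auto
    then show "a \<in> {1..n} \<and> (\<forall>i. in_shape n mu i 1 \<longrightarrow> \<sigma> i 1 \<noteq> a)"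
      using in_shape_1_iff by (auto simp: I_def)
    show "b = a" if "b \<in> {1..n} \<and> (\<forall>i. in_shape n mu i 1 \<longrightarrow> \<sigma> i 1 \<noteq> b)" for b
    proof -
      have "b \<notin> I" using that in_shape_1_iff by (auto simp: I_def)
      then show "b = a" using that a by auto
    qed
  qed
  with a \<open>I \<subseteq> {1..n}\<close> show "I = {1..n} - {a\<^sub>0}" "a\<^sub>0 \<in> {1..n}" by blast+
qed

text \<open>Since the first block of the chain is empty, \<open>\<pi>\<^sub>1 = w\<close>; so the only \<open>w\<close> that can
  start a pair in the fibre lists the first column and then \<open>a\<^sub>0\<close>.\<close>

definition first_column_perm :: "nat \<Rightarrow> nat" where
  "first_column_perm i = (if 1 \<le> i \<and> i \<le> n - 1 then \<sigma> i 1 else if i = n then a\<^sub>0 else i)"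

lemma first_column_perm_n: "first_column_perm n = a\<^sub>0"
proof -
  have "\<not> n \<le> n - 1" using two_le_n by arith
  then show ?thesis by (simp add: first_column_perm_def)
qed

lemma first_column_perm_permutes: "first_column_perm permutes {1..n}"
proof (rule bij_imp_permutes)
  have "{1..n} = insert n {1..n-1}" using two_le_n by auto
  moreover have "first_column_perm ` {1..n-1} = (\<lambda>i. \<sigma> i 1) ` {1..n-1}"
    by (rule image_cong) (auto simp: first_column_perm_def)
  ultimately have image: "first_column_perm ` {1..n} = {1..n}"
    using first_column_image first_column_perm_n by auto
  then have "inj_on first_column_perm {1..n}" by (intro eq_card_imp_inj_on) auto
  with image show "bij_betw first_column_perm {1..n} {1..n}" by (simp add: bij_betw_def)
qed (use two_le_n in \<open>auto simp: first_column_perm_def\<close>)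

lemma column_matches_1_iff:
  assumes w: "w permutes {1..n}"
  shows "column_matches 1 w \<longleftrightarrow> w = first_column_perm"
proof
  assume match: "column_matches 1 w"
  have "w n \<notin> (\<lambda>i. \<sigma> i 1) ` {1..n-1}"
  proof
    assume "w n \<in> (\<lambda>i. \<sigma> i 1) ` {1..n-1}"
    then obtain i where "i \<in> {1..n-1}" "w n = w i"
      using match unfolding column_matches_def conj_part_1 by auto
    then show False using injD[OF permutes_inj[OF w], of n i] two_le_n by auto
  qed
  then have "w n = a\<^sub>0" using first_column_image permutes_in_image[OF w, of n] two_le_n by auto
  then show "w = first_column_perm"
    using match permutes_not_in[OF w] two_le_n
    unfolding column_matches_def conj_part_1 first_column_perm_def by (intro ext) auto
next
  assume "w = first_column_perm"
  then show "column_matches 1 w"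
    unfolding column_matches_def conj_part_1 first_column_perm_def by auto
qed

lemma perm_len_first_column_perm: "perm_len n first_column_perm = (n - a\<^sub>0) + first_col_len n mu \<sigma>"
proof -
  define X where "X = {(a,b). 1 \<le> a \<and> a < b \<and> b \<le> n - 1 \<and> \<sigma> b 1 < \<sigma> a 1}"
  define Y where "Y = {i\<in>{1..n-1}. a\<^sub>0 < \<sigma> i 1}"
  have pair_iff: "(i, j) \<in> {(i,j). 1 \<le> i \<and> i < j \<and> j \<le> n \<and> first_column_perm j < first_column_perm i}
      \<longleftrightarrow> (i, j) \<in> X \<union> (\<lambda>i. (i, n)) ` Y" for i j
    using two_le_n first_column_perm_n
    by (cases "j = n") (auto simp: X_def Y_def first_column_perm_def)
  have "{(i,j). 1 \<le> i \<and> i < j \<and> j \<le> n \<and> first_column_perm j < first_column_perm i}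
      = X \<union> (\<lambda>i. (i, n)) ` Y"
    by (rule set_eqI) (use pair_iff[of "fst x" "snd x" for x] in simp)
  moreover have "finite X" by (rule finite_subset[of _ "{1..n} \<times> {1..n}"]) (auto simp: X_def)
  moreover have "X \<inter> (\<lambda>i. (i, n)) ` Y = {}" by (auto simp: X_def)
  moreover have "card ((\<lambda>i. (i, n)) ` Y) = card Y" by (rule card_image) (auto simp: inj_on_def)
  moreover have "card Y = card ((\<lambda>i. \<sigma> i 1) ` Y)"
    by (rule card_image[symmetric], rule inj_on_subset[OF first_column_inj]) (auto simp: Y_def)
  moreover have "(\<lambda>i. \<sigma> i 1) ` Y = {Suc a\<^sub>0..n}"
  proof -
    have "(\<lambda>i. \<sigma> i 1) ` Y = {v \<in> (\<lambda>i. \<sigma> i 1) ` {1..n-1}. a\<^sub>0 < v}"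
      unfolding Y_def by auto
    also have "\<dots> = {v \<in> {1..n} - {a\<^sub>0}. a\<^sub>0 < v}"
      by (simp only: first_column_image(1))
    also have "\<dots> = {Suc a\<^sub>0..n}"
      by (rule set_eqI) (auto simp: Suc_le_eq)
    finally show ?thesis .
  qed
  moreover have "card X = first_col_len n mu \<sigma>" unfolding X_def first_col_len_def conj_part_1 ..
  ultimately show ?thesis unfolding perm_len_def by (simp add: card_Un_disjoint Y_def)
qed

end

section \<open>The statistics \<open>des\<close> and \<open>inv\<close>\<close>

lemma card_pairs_snd:
  assumes "finite J" "\<forall>j\<in>J. finite {i. P i j}" "\<forall>i j. P i j \<longrightarrow> j \<in> J"
  shows "card {(i,j). P i j} = (\<Sum>j\<in>J. card {i. P i j})"
proof -
  have "{(i,j). P i j} = (\<lambda>(j,i). (i,j)) ` (SIGMA j:J. {i. P i j})" using assms(3) by auto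
  moreover have "inj_on (\<lambda>(j,i). (i,j)) (SIGMA j:J. {i. P i j})" by (auto simp: inj_on_def)
  ultimately have "card {(i,j). P i j} = card (SIGMA j:J. {i. P i j})" by (simp add: card_image)
  also have "\<dots> = (\<Sum>j\<in>J. card {i. P i j})" using assms by (simp add: card_SigmaI)
  finally show ?thesis .
qed

lemma card_pairs_fst:
  assumes "finite A" "\<forall>a\<in>A. finite {b. P a b}" "\<forall>a b. P a b \<longrightarrow> a \<in> A"
  shows "card {(a,b). P a b} = (\<Sum>a\<in>A. card {b. P a b})"
proof -
  have "{(a,b). P a b} = (SIGMA a:A. {b. P a b})" using assms(3) by auto
  then show ?thesis using assms by (simp add: card_SigmaI)
qed

lemma card_triples:
  fixes P :: "'i \<Rightarrow> 'j \<Rightarrow> 'k \<Rightarrow> bool"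
  assumes "finite KS" "\<forall>k\<in>KS. finite (I k)" "\<forall>k\<in>KS. \<forall>i\<in>I k. finite {j. P i j k}"
    "\<forall>i j k. P i j k \<longrightarrow> k \<in> KS \<and> i \<in> I k"
  shows "card {(i,j,k). P i j k} = (\<Sum>k\<in>KS. \<Sum>i\<in>I k. card {j. P i j k})"
proof -
  have "{(i,j,k). P i j k} = (\<lambda>(k,i,j). (i,j,k)) ` (SIGMA k:KS. SIGMA i:I k. {j. P i j k})"
  proof (rule set_eqI)
    fix x :: "'i \<times> 'j \<times> 'k"
    obtain i j k where x: "x = (i,j,k)" by (cases x) auto
    show "x \<in> {(i,j,k). P i j k} \<longleftrightarrow> x \<in> (\<lambda>(k,i,j). (i,j,k)) ` (SIGMA k:KS. SIGMA i:I k. {j. P i j k})"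
    proof
      assume "x \<in> {(i,j,k). P i j k}"
      then have "P i j k" using x by simp
      then have "(k,i,j) \<in> (SIGMA k:KS. SIGMA i:I k. {j. P i j k})" using assms(4) by auto
      then show "x \<in> (\<lambda>(k,i,j). (i,j,k)) ` (SIGMA k:KS. SIGMA i:I k. {j. P i j k})"
        unfolding x by (rule rev_image_eqI) simp
    qed auto
  qed
  moreover have "inj_on (\<lambda>(k,i,j). (i,j,k)) (SIGMA k:KS. SIGMA i:I k. {j. P i j k})" by (auto simp: inj_on_def)
  ultimately have "card {(i,j,k). P i j k} = card (SIGMA k:KS. SIGMA i:I k. {j. P i j k})" by (simp add: card_image)
  also have "\<dots> = (\<Sum>k\<in>KS. card (SIGMA i:I k. {j. P i j k}))"
    using assms by (intro card_SigmaI) (auto intro: finite_SigmaI)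
  also have "\<dots> = (\<Sum>k\<in>KS. \<Sum>i\<in>I k. card {j. P i j k})"
    using assms by (intro sum.cong refl card_SigmaI) auto
  finally show ?thesis .
qed

text \<open>The pointwise identity behind the telescoping of \<open>inv\<close>: for cells \<open>(i, j - 1)\<close>,
  \<open>(i, j)\<close> and a lower cell \<open>(c, j - 1)\<close>, with \<open>ck\<close> saying that \<open>(c, j)\<close> is a cell too,
  \<open>ai, bi, ac, bc\<close> are the four entries.\<close>

lemma inversion_indicator_identity:
  fixes ai ac bi bc :: nat
  assumes "ai \<le> bi" "ac \<noteq> ai" "bi \<noteq> ac" "ck \<Longrightarrow> ac \<le> bc" "ck \<Longrightarrow> bc \<noteq> bi"
  shows "(if ac < bi \<and> (ck \<longrightarrow> bi < bc) then 1 else 0) + (if ck \<and> bc < bi then 1 else 0)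
       = (if ai < ac \<and> ac < bi then 1 else 0) + (if ac < ai then (1::nat) else 0)"
  using assms by (cases ck) auto

context staircase_filling
begin

definition changes :: "nat \<Rightarrow> nat \<Rightarrow> nat" where
  "changes j i = (if \<sigma> i (j - 1) \<noteq> \<sigma> i j then 1 else 0)"

definition between :: "nat \<Rightarrow> nat \<Rightarrow> nat" where
  "between j i = card {c. i < c \<and> c < Suc (cp (j - 1)) \<and> \<sigma> i (j - 1) < \<sigma> c (j - 1) \<and> \<sigma> c (j - 1) < \<sigma> i j}"

lemma row_factor_eq: "row_factor t (\<lambda>i. \<sigma> i (j - 1)) (\<lambda>i. \<sigma> i j) (cp (j - 1)) i = (1 - t) ^ changes j i * t ^ between j i"
proof (cases "\<sigma> i (j - 1) = \<sigma> i j")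
  case True
  then have "between j i = 0" unfolding between_def by auto
  then show ?thesis using True unfolding row_factor_def changes_def by simp
next
  case False then show ?thesis unfolding row_factor_def changes_def between_def rect_count_def by simp
qed

lemma prod_column_factor:
  fixes t :: "'a::comm_ring_1"
  shows "(\<Prod>j\<in>{2..M}. column_factor t j) = (1 - t) ^ (\<Sum>j\<in>{2..M}. \<Sum>i\<in>{1..cp j}. changes j i) * t ^ (\<Sum>j\<in>{2..M}. \<Sum>i\<in>{1..cp j}. between j i)"
  unfolding column_factor_def row_factor_eq by (simp add: prod.distrib power_sum)

lemma sum_shift_Suc: "(\<Sum>k\<in>{1..M-1}. g (Suc k)) = (\<Sum>j\<in>{2..M}. (g j :: nat))"
proof -
  have e: "{2..M} = {Suc 1..Suc (M - 1)}" using mu_1_pos by auto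
  show ?thesis unfolding e sum.shift_bounds_cl_Suc_ivl ..
qed

lemma des_fill_eq: "des_fill n mu \<sigma> = (\<Sum>j\<in>{2..M}. \<Sum>i\<in>{1..cp j}. changes j i)"
proof -
  define P where "P = (\<lambda>i j. in_shape n mu i j \<and> in_shape n mu i (Suc j) \<and> \<sigma> i j < \<sigma> i (Suc j))"
  have bnd: "\<forall>i j. P i j \<longrightarrow> j \<in> {1..M-1}"
  proof (intro allI impI)
    fix i j assume "P i j"
    then have a: "1 \<le> j" "1 \<le> i" "i \<le> cp (Suc j)" unfolding P_def in_shape_iff by auto
    then have "Suc j \<le> M" using conj_part_beyond[of "Suc j"] by (cases "M < Suc j") auto
    then show "j \<in> {1..M-1}" using a by auto
  qed
  have fin: "\<forall>j\<in>{1..M-1}. finite {i. P i j}"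
    by (auto intro: finite_subset[of _ "{1..n}"] simp: P_def in_shape_def)
  have "des_fill n mu \<sigma> = card {(i,j). P i j}" unfolding des_fill_def P_def ..
  also have "\<dots> = (\<Sum>j\<in>{1..M-1}. card {i. P i j})" by (rule card_pairs_snd[OF _ fin bnd]) simp
  also have "\<dots> = (\<Sum>j\<in>{1..M-1}. \<Sum>i\<in>{1..cp (Suc j)}. changes (Suc j) i)"
  proof (rule sum.cong[OF refl])
    fix j assume j: "j \<in> {1..M-1}"
    have cpj: "cp (Suc j) \<le> cp j" using j by (intro conj_part_anti) auto
    have "{i. P i j} = {i\<in>{1..cp (Suc j)}. \<sigma> i (Suc j - 1) \<noteq> \<sigma> i (Suc j)}"
    proof (rule set_eqI)
      fix i
      show "i \<in> {i. P i j} \<longleftrightarrow> i \<in> {i\<in>{1..cp (Suc j)}. \<sigma> i (Suc j - 1) \<noteq> \<sigma> i (Suc j)}"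
      proof
        assume "i \<in> {i. P i j}" then show "i \<in> {i\<in>{1..cp (Suc j)}. \<sigma> i (Suc j - 1) \<noteq> \<sigma> i (Suc j)}"
          unfolding P_def in_shape_iff by auto
      next
        assume i: "i \<in> {i\<in>{1..cp (Suc j)}. \<sigma> i (Suc j - 1) \<noteq> \<sigma> i (Suc j)}"
        then have s1: "in_shape n mu i j" "in_shape n mu i (Suc j)" unfolding in_shape_iff using j cpj by auto
        then have "\<sigma> i j \<le> \<sigma> i (Suc j)" by (rule filling_row_mono)
        then show "i \<in> {i. P i j}" using s1 i unfolding P_def by auto
      qed
    qed
    then show "card {i. P i j} = (\<Sum>i\<in>{1..cp (Suc j)}. changes (Suc j) i)"
      unfolding changes_def by (simp only:) (rule card_filter_eq_sum, simp)
  qed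
  also have "\<dots> = (\<Sum>j\<in>{2..M}. \<Sum>i\<in>{1..cp j}. changes j i)"
    by (rule sum_shift_Suc[where g = "\<lambda>j. \<Sum>i\<in>{1..cp j}. changes j i"])
  finally show ?thesis .
qed

definition inv_at :: "nat \<Rightarrow> nat \<Rightarrow> nat" where
  "inv_at J i = card {c\<in>{Suc i..cp (J - 1)}. \<sigma> c (J - 1) < \<sigma> i J \<and> (c \<le> cp J \<longrightarrow> \<sigma> i J < \<sigma> c J)}"

definition column_inv :: "nat \<Rightarrow> nat" where
  "column_inv j = (\<Sum>i\<in>{1..cp j}. card {c\<in>{Suc i..cp j}. \<sigma> c j < \<sigma> i j})"

lemma inv_fill_eq_sum: "inv_fill n mu \<sigma> = (\<Sum>J\<in>{2..M}. \<Sum>i\<in>{1..cp J}. inv_at J i)"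
proof -
  define P where "P = (\<lambda>i j k. in_shape n mu i (Suc k) \<and> in_shape n mu j k \<and> i < j \<and>
      \<sigma> j k < \<sigma> i (Suc k) \<and> (in_shape n mu j (Suc k) \<longrightarrow> \<sigma> i (Suc k) < \<sigma> j (Suc k)))"
  have bnd: "\<forall>i j k. P i j k \<longrightarrow> k \<in> {1..M-1} \<and> i \<in> {1..cp (Suc k)}"
  proof (intro allI impI)
    fix i j k assume "P i j k"
    then have a: "1 \<le> k" "1 \<le> i" "i \<le> cp (Suc k)" unfolding P_def in_shape_iff by auto
    then have "Suc k \<le> M" using conj_part_beyond[of "Suc k"] by (cases "M < Suc k") auto
    then show "k \<in> {1..M-1} \<and> i \<in> {1..cp (Suc k)}" using a by auto
  qed
  have fin: "\<forall>k\<in>{1..M-1}. \<forall>i\<in>{1..cp (Suc k)}. finite {j. P i j k}"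
    by (auto intro: finite_subset[of _ "{1..n}"] simp: P_def in_shape_def)
  have "inv_fill n mu \<sigma> = card {(i,j,k). P i j k}" unfolding inv_fill_def P_def ..
  also have "\<dots> = (\<Sum>k\<in>{1..M-1}. \<Sum>i\<in>{1..cp (Suc k)}. card {j. P i j k})"
    by (rule card_triples[OF _ _ fin bnd]) auto
  also have "\<dots> = (\<Sum>k\<in>{1..M-1}. \<Sum>i\<in>{1..cp (Suc k)}. inv_at (Suc k) i)"
  proof (intro sum.cong refl)
    fix k i assume k: "k \<in> {1..M-1}" and i: "i \<in> {1..cp (Suc k)}"
    have "{j. P i j k} = {c\<in>{Suc i..cp (Suc k - 1)}. \<sigma> c (Suc k - 1) < \<sigma> i (Suc k) \<and> (c \<le> cp (Suc k) \<longrightarrow> \<sigma> i (Suc k) < \<sigma> c (Suc k))}"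
      using k i unfolding P_def in_shape_iff by auto
    then show "card {j. P i j k} = inv_at (Suc k) i" unfolding inv_at_def by simp
  qed
  also have "\<dots> = (\<Sum>J\<in>{2..M}. \<Sum>i\<in>{1..cp J}. inv_at J i)"
    by (rule sum_shift_Suc[where g = "\<lambda>J. \<Sum>i\<in>{1..cp J}. inv_at J i"])
  finally show ?thesis .
qed

lemma first_col_len_eq_column_inv: "first_col_len n mu \<sigma> = column_inv 1"
proof -
  have "first_col_len n mu \<sigma> = card {(a,b). 1 \<le> a \<and> a < b \<and> b \<le> cp 1 \<and> \<sigma> b 1 < \<sigma> a 1}"
    unfolding first_col_len_def ..
  also have "\<dots> = (\<Sum>a\<in>{1..cp 1}. card {b. 1 \<le> a \<and> a < b \<and> b \<le> cp 1 \<and> \<sigma> b 1 < \<sigma> a 1})"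
    by (rule card_pairs_fst) auto
  also have "\<dots> = column_inv 1" unfolding column_inv_def
    by (intro sum.cong refl arg_cong[where f = card]) auto
  finally show ?thesis .
qed

lemma column_inv_M: "column_inv M = 0"
  unfolding column_inv_def conj_part_M by simp

lemma inv_at_row:
  assumes J: "2 \<le> J" "J \<le> M" and i: "i \<in> {1..cp J}"
  shows "inv_at J i + card {c\<in>{Suc i..cp J}. \<sigma> c J < \<sigma> i J}
       = between J i + card {c\<in>{Suc i..cp (J - 1)}. \<sigma> c (J - 1) < \<sigma> i (J - 1)}"
proof -
  define k where "k = cp J"
  define K where "K = cp (J - 1)"
  define a where "a = (\<lambda>c. \<sigma> c (J - 1))"
  define b where "b = (\<lambda>c. \<sigma> c J)"
  define C where "C = {Suc i..K}"
  have kK: "k \<le> K" unfolding k_def K_def using J by (intro conj_part_anti) auto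
  have jj: "Suc (J - 1) = J" using J by simp
  have "1 \<le> J - 1" using J by simp
  then have shK: "in_shape n mu c (J - 1) \<longleftrightarrow> 1 \<le> c \<and> c \<le> K" for c
    unfolding in_shape_iff K_def by simp
  have shk: "in_shape n mu c J \<longleftrightarrow> 1 \<le> c \<and> c \<le> k" for c
    unfolding in_shape_iff k_def using J by simp
  have e1: "inv_at J i = (\<Sum>c\<in>C. if a c < b i \<and> (c \<le> k \<longrightarrow> b i < b c) then 1 else 0)"
    unfolding inv_at_def C_def a_def b_def k_def K_def by (rule card_filter_eq_sum) simp
  have "{c\<in>{Suc i..cp J}. \<sigma> c J < \<sigma> i J} = {c\<in>C. c \<le> k \<and> b c < b i}"
    unfolding C_def b_def k_def using kK by (auto simp: k_def K_def)
  then have e2: "card {c\<in>{Suc i..cp J}. \<sigma> c J < \<sigma> i J} = (\<Sum>c\<in>C. if c \<le> k \<and> b c < b i then 1 else 0)"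
    by (simp only:) (rule card_filter_eq_sum, simp add: C_def)
  have "{c. i < c \<and> c < Suc (cp (J - 1)) \<and> \<sigma> i (J - 1) < \<sigma> c (J - 1) \<and> \<sigma> c (J - 1) < \<sigma> i J}
      = {c\<in>C. a i < a c \<and> a c < b i}" unfolding C_def a_def b_def K_def by auto
  then have e3: "between J i = (\<Sum>c\<in>C. if a i < a c \<and> a c < b i then 1 else 0)"
    unfolding between_def by (simp only:) (rule card_filter_eq_sum, simp add: C_def)
  have e4: "card {c\<in>{Suc i..cp (J - 1)}. \<sigma> c (J - 1) < \<sigma> i (J - 1)}
      = (\<Sum>c\<in>C. if a c < a i then 1 else 0)"
    unfolding C_def a_def K_def by (rule card_filter_eq_sum) simp
  have "(if a c < b i \<and> (c \<le> k \<longrightarrow> b i < b c) then 1 else 0) + (if c \<le> k \<and> b c < b i then 1 else 0)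
     = (if a i < a c \<and> a c < b i then 1 else 0) + (if a c < a i then (1::nat) else 0)"
    if c: "c \<in> C" for c
  proof (rule inversion_indicator_identity)
    have si: "in_shape n mu i (J - 1)" "in_shape n mu i (Suc (J - 1))" using shK shk i kK jj k_def by auto
    show "a i \<le> b i" using filling_row_mono[OF si] jj unfolding a_def b_def by simp
    have sc: "in_shape n mu c (J - 1)" using shK c i unfolding C_def by auto
    show "a c \<noteq> a i" using filling_col_distinct[OF sc si(1)] c unfolding C_def a_def by auto
    show "b i \<noteq> a c" using filling_no_attack[OF sc si(2)] c jj unfolding C_def a_def b_def by auto
    assume ck: "c \<le> k"
    have sc2: "in_shape n mu c J" using shk ck c i unfolding C_def by auto
    show "a c \<le> b c" using filling_row_mono[of c "J - 1"] sc sc2 jj unfolding a_def b_def by simp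
    show "b c \<noteq> b i" using filling_col_distinct[OF sc2] si(2) jj c unfolding C_def b_def by auto
  qed
  then show ?thesis
    unfolding e1 e2 e3 e4 sum.distrib[symmetric] by (rule sum.cong[OF refl])
qed

lemma inv_at_telescope:
  assumes J: "2 \<le> J" "J \<le> M"
  shows "(\<Sum>i\<in>{1..cp J}. inv_at J i) + column_inv J = (\<Sum>i\<in>{1..cp J}. between J i) + column_inv (J - 1)"
proof -
  have "cp J \<le> cp (J - 1)" using J by (intro conj_part_anti) auto
  moreover have "cp (J - 1) \<le> Suc (cp J)" using conj_part_drop_le_1[of "J - 1"] J by simp
  ultimately have prev: "column_inv (J - 1)
      = (\<Sum>i\<in>{1..cp J}. card {c\<in>{Suc i..cp (J - 1)}. \<sigma> c (J - 1) < \<sigma> i (J - 1)})"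
    unfolding column_inv_def by (intro sum.mono_neutral_right) auto
  show ?thesis
    unfolding prev column_inv_def[of J] sum.distrib[symmetric] using inv_at_row[OF J] by (intro sum.cong) auto
qed

lemma inv_fill_eq: "inv_fill n mu \<sigma> = first_col_len n mu \<sigma> + (\<Sum>j\<in>{2..M}. \<Sum>i\<in>{1..cp j}. between j i)"
proof -
  define IV where "IV = (\<lambda>J. \<Sum>i\<in>{1..cp J}. inv_at J i)"
  define AA where "AA = (\<lambda>J. \<Sum>i\<in>{1..cp J}. between J i)"
  have k: "IV J + column_inv J = AA J + column_inv (J - 1)" if "J \<in> {2..M}" for J
    unfolding IV_def AA_def using inv_at_telescope that by auto
  have s1: "sum IV {2..M} + sum column_inv {2..M} = sum AA {2..M} + (\<Sum>J\<in>{2..M}. column_inv (J - 1))"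
    unfolding sum.distrib[symmetric] using k by (rule sum.cong[OF refl])
  have s2: "(\<Sum>J\<in>{2..M}. column_inv (J - 1)) = (\<Sum>j\<in>{1..M-1}. column_inv j)"
    using sum_shift_Suc[where g = "\<lambda>J. column_inv (J - 1)"] by simp
  have s3: "sum column_inv {1..M} = column_inv 1 + sum column_inv {2..M}"
    using sum.atLeast_Suc_atMost[OF mu_1_pos, of column_inv] by (simp add: numeral_2_eq_2)
  have s4: "sum column_inv {1..M} = sum column_inv {1..M-1} + column_inv M"
  proof -
    have "M = Suc (M - 1)" using mu_1_pos by simp
    then have e: "{1..M} = insert M {1..M-1}" by auto
    have nm: "M \<notin> {1..M-1}" using mu_1_pos by auto
    show ?thesis unfolding e using nm by (simp add: add.commute)
  qed
  have "inv_fill n mu \<sigma> = sum IV {2..M}" unfolding inv_fill_eq_sum IV_def ..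
  then show ?thesis using s1 s2 s3 s4 column_inv_M first_col_len_eq_column_inv unfolding AA_def by linarith
qed

end

context staircase_filling
begin

lemma fiber_sum_formula:
  fixes t :: "'a::comm_ring_1"
  shows "(\<Sum>(w,T)\<in>fiber n mu \<sigma>. fiber_term t n mu w T)
       = (-1) ^ (n - a\<^sub>0 + first_col_len n mu \<sigma>) * t ^ (n - a\<^sub>0 + inv_fill n mu \<sigma>) * (1 - t) ^ des_fill n mu \<sigma>"
proof -
  define X where "X = (\<Prod>j\<in>{2..M}. column_factor t j)"
  define E where "E = (\<lambda>v. if column_check n mu \<sigma> (length (alcove_chain n mu)) v then 1 else (0::'a))"
  have "[1..<Suc M] = 1 # [2..<Suc M]" using mu_1_pos by (simp add: upt_conv_Cons numeral_2_eq_2)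
  then have "alcove_chain n mu = chain_from 2"
    unfolding alcove_chain_def chain_from_def using chain_block_1 by simp
  then have checked: "checked_sum t E (column_check n mu \<sigma>) (alcove_chain n mu) 0 w
      = (if w = first_column_perm then X else 0)" if "w permutes {1..n}" for w
    using checked_sum_chain_from[of 2 w t] column_matches_1_iff[OF that] that mu_1_pos block_end_1
    unfolding X_def E_def by simp
  have "(\<Sum>(w,T)\<in>fiber n mu \<sigma>. fiber_term t n mu w T)
      = (\<Sum>w | w permutes {1..n}. (-t) ^ perm_len n w * checked_sum t E (column_check n mu \<sigma>) (alcove_chain n mu) 0 w)"
    unfolding E_def by (rule fiber_sum_eq_checked_sum)
  also have "\<dots> = (\<Sum>w | w permutes {1..n}. if w = first_column_perm then (- t) ^ perm_len n first_column_perm * X else 0)"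
    by (rule sum.cong) (simp_all add: checked)
  also have "\<dots> = (- t) ^ perm_len n first_column_perm * X"
    using first_column_perm_permutes by (simp add: finite_permutations sum.delta)
  also have "\<dots> = (-1) ^ (n - a\<^sub>0 + first_col_len n mu \<sigma>) * t ^ (n - a\<^sub>0 + inv_fill n mu \<sigma>) * (1 - t) ^ des_fill n mu \<sigma>"
    unfolding perm_len_first_column_perm X_def prod_column_factor des_fill_eq inv_fill_eq power_minus[of t]
    by (simp add: power_add mult_ac)
  finally show ?thesis .
qed

end

lemma fiber_sum_formula_1:
  fixes t :: "'a::comm_ring_1"
  assumes "lam 1 = 0"
  defines "mu \<equiv> lam_rho 1 lam"
  shows "(\<Sum>(w,T)\<in>fiber 1 mu \<sigma>. fiber_term t 1 mu w T)
       = (-1) ^ (1 - missing_entry 1 mu \<sigma> + first_col_len 1 mu \<sigma>) * t ^ (1 - missing_entry 1 mu \<sigma> + inv_fill 1 mu \<sigma>)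
          * (1 - t) ^ des_fill 1 mu \<sigma>"
proof -
  have "mu 1 = 0" using assms by (simp add: lam_rho_def)
  then have no_cells: "\<not> in_shape 1 mu i j" for i j by (auto simp: in_shape_def)
  have "alcove_chain 1 mu = []" using \<open>mu 1 = 0\<close> by (simp add: alcove_chain_def)
  then have "fiber 1 mu \<sigma> = {(id, {})}"
    using no_cells by (auto simp: fiber_def admissible_def permutes_id)
  moreover have "perm_len 1 w = 0" for w
    unfolding perm_len_def by (rule card_eq_0_iff[THEN iffD2]) auto
  moreover have "missing_entry 1 mu \<sigma> = 1"
    unfolding missing_entry_def using no_cells by (intro the_equality) auto
  moreover have "conj_part 1 mu 1 = 0" using \<open>mu 1 = 0\<close> by (auto simp: conj_part_def)
  then have "first_col_len 1 mu \<sigma> = 0"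
    unfolding first_col_len_def by (intro card_eq_0_iff[THEN iffD2]) auto
  moreover have "inv_fill 1 mu \<sigma> = 0" "des_fill 1 mu \<sigma> = 0"
  proof -
    have no_triples: "{(i::nat, j::nat, k::nat). False} = {}" by auto
    show "inv_fill 1 mu \<sigma> = 0" "des_fill 1 mu \<sigma> = 0"
      unfolding inv_fill_def des_fill_def using no_cells by (simp_all add: no_triples)
  qed
  ultimately show ?thesis by (simp add: fiber_term_def)
qed

theorem theorem3p1:
  fixes n :: nat and lam :: "nat \<Rightarrow> nat" and \<sigma> :: "nat \<Rightarrow> nat \<Rightarrow> nat"
    and t :: "'a :: comm_ring_1"
  assumes "1 \<le> n"
    and "\<forall>i. 1 \<le> i \<and> i < n \<longrightarrow> lam (Suc i) \<le> lam i"
    and "lam n = 0"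
    and "\<sigma> \<in> fillings_F n (lam_rho n lam)"
  shows "(\<Sum>(w,T) \<in> fiber n (lam_rho n lam) \<sigma>.
            (-1) ^ perm_len n (wT n (lam_rho n lam) w T)
          * t ^ ((perm_len n w + perm_len n (wT n (lam_rho n lam) w T) - card T) div 2)
          * (t - 1) ^ card T)
       = (-1) ^ (n - missing_entry n (lam_rho n lam) \<sigma> + first_col_len n (lam_rho n lam) \<sigma>)
          * t ^ (n - missing_entry n (lam_rho n lam) \<sigma> + inv_fill n (lam_rho n lam) \<sigma>)
          * (1 - t) ^ des_fill n (lam_rho n lam) \<sigma>"
proof (cases "n = 1")
  case True
  then show ?thesis using fiber_sum_formula_1[where lam = lam and \<sigma> = \<sigma> and t = t] assms(3) by (simp add: fiber_term_def)
next
  case False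
  then interpret staircase_filling n lam \<sigma>
    using assms by unfold_locales auto
  show ?thesis using fiber_sum_formula[of t] by (simp add: fiber_term_def)
qed

end
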